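(* Let $L$ be a cosimplicial group, $b\in Z^1(L)$, and $h_b\colon F\to L$ the cosimplicial morphism with $h_b^1(a_1)=b$. Then the square \[\begin{array}{ccc}F&\xrightarrow{\iota_+}&F^+\\ {\scriptstyle h_b}\downarrow&&\downarrow{\scriptstyle \mathrm{Id}*h_b}\\ L&\xrightarrow{\iota_b}&L^b\end{array}\] is a pushout in the category of cosimplicial groups.
   Context: $F$ is the cosimplicial group with $F_n$ free on $a_1,\dots,a_n$, cofaces $d^0(a_j)=a_{j+1}$; for $1\le i\le n-1$, $d^i(a_j)=a_j$ ($j<i$), $d^i(a_i)=a_ia_{i+1}$, $d^i(a_j)=a_{j+1}$ ($j>i$); $d^n(a_j)=a_j$; codegeneracies $s^i(a_j)=a_j$ ($j\le i$), $s^i(a_{i+1})=e$, $s^i(a_j)=a_{j-1}$ ($j>i+1$). $Z^1(L)=\{b\in L_1: d^2(b)d^0(b)=d^1(b)\}$; cosimplicial morphisms $F\to L$ correspond bijectively to $Z^1(L)$ via $h\mapsto h^1(a_1)$. Construction of $L^b$ for $b\in Z^1(L)$: let $\overline F_0$ be the infinite cyclic group on $a_0$; put $b_1=b$, $b_{n+1}=d^{n+1}(b_n)$. Then $L^b_n=\overline F_0*L_n$ (free product), codegeneracies $s^i_b=\mathrm{Id}*s^i$, cofaces $d^i_b=\mathrm{Id}*d^i$ for $i>0$, and $d^0_b\colon L^b_{n-1}\to L^b_n$ is $d^0$ on $L_{n-1}$ and sends $a_0\mapsto a_0b_n$. $\iota_b\colon L\hookrightarrow L^b$ is induced by the inclusions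 $L_n\hookrightarrow\overline F_0*L_n$. $F^+:=F^{a_1}$ (note $a_1\in Z^1(F)$), with $\iota_+:=\iota_{a_1}$; $\mathrm{Id}*h_b\colon F^+\to L^b$ is the identity on $\overline F_0$ and $h_b$ on $F_n$. *)

theory Defs
  imports "HOL-Algebra.Group"
begin

text \<open>A letter (g, True) stands for the generator g, (g, False) for its inverse.\<close>

fun fg_red :: "('g \<times> bool) list \<Rightarrow> ('g \<times> bool) list" where
  "fg_red [] = []"
| "fg_red (x # xs) = (case fg_red xs of
       [] \<Rightarrow> [x]
     | y # ys \<Rightarrow> (if fst y = fst x \<and> snd y \<noteq> snd x then ys else x # y # ys))"

definition free_group :: "'g set \<Rightarrow> ('g \<times> bool) list monoid" where
  "free_group S = \<lparr>carrier = {w. set w \<subseteq> S \<times> UNIV \<and> fg_red w = w},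
                    monoid.mult = (\<lambda>x y. fg_red (x @ y)), one = []\<rparr>"

definition gen :: "'g \<Rightarrow> ('g \<times> bool) list" where
  "gen g = [(g, True)]"

definition free_lift :: "('a, 'm) monoid_scheme \<Rightarrow> ('g \<Rightarrow> 'a) \<Rightarrow> ('g \<times> bool) list \<Rightarrow> 'a" where
  "free_lift G \<phi> w = foldr (\<lambda>(g, e) acc. (if e then \<phi> g else inv\<^bsub>G\<^esub> (\<phi> g)) \<otimes>\<^bsub>G\<^esub> acc) w \<one>\<^bsub>G\<^esub>"

fun fp_merge :: "('a, 'm) monoid_scheme \<Rightarrow> ('b, 'n) monoid_scheme \<Rightarrow> ('a + 'b) \<Rightarrow> ('a + 'b) list \<Rightarrow> ('a + 'b) list" where
  "fp_merge G H (Inl g) [] = (if g = \<one>\<^bsub>G\<^esub> then [] else [Inl g])"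
| "fp_merge G H (Inr h) [] = (if h = \<one>\<^bsub>H\<^esub> then [] else [Inr h])"
| "fp_merge G H (Inl g) (Inl g' # ys) =
     (if g = \<one>\<^bsub>G\<^esub> then Inl g' # ys
      else if g \<otimes>\<^bsub>G\<^esub> g' = \<one>\<^bsub>G\<^esub> then ys else Inl (g \<otimes>\<^bsub>G\<^esub> g') # ys)"
| "fp_merge G H (Inr h) (Inr h' # ys) =
     (if h = \<one>\<^bsub>H\<^esub> then Inr h' # ys
      else if h \<otimes>\<^bsub>H\<^esub> h' = \<one>\<^bsub>H\<^esub> then ys else Inr (h \<otimes>\<^bsub>H\<^esub> h') # ys)"
| "fp_merge G H (Inl g) (Inr h' # ys) =
     (if g = \<one>\<^bsub>G\<^esub> then Inr h' # ys else Inl g # Inr h' # ys)"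
| "fp_merge G H (Inr h) (Inl g' # ys) =
     (if h = \<one>\<^bsub>H\<^esub> then Inl g' # ys else Inr h # Inl g' # ys)"

fun fp_red :: "('a, 'm) monoid_scheme \<Rightarrow> ('b, 'n) monoid_scheme \<Rightarrow> ('a + 'b) list \<Rightarrow> ('a + 'b) list" where
  "fp_red G H [] = []"
| "fp_red G H (x # xs) = fp_merge G H x (fp_red G H xs)"

definition free_prod :: "('a, 'm) monoid_scheme \<Rightarrow> ('b, 'n) monoid_scheme \<Rightarrow> ('a + 'b) list monoid" where
  "free_prod G H = \<lparr>carrier = {w. set w \<subseteq> Inl ` carrier G \<union> Inr ` carrier H \<and> fp_red G H w = w},
                    monoid.mult = (\<lambda>x y. fp_red G H (x @ y)), one = []\<rparr>"

definition fp_inl :: "('a, 'm) monoid_scheme \<Rightarrow> ('b, 'n) monoid_scheme \<Rightarrow> 'a \<Rightarrow> ('a + 'b) list" where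
  "fp_inl G H g = fp_red G H [Inl g]"

definition fp_inr :: "('a, 'm) monoid_scheme \<Rightarrow> ('b, 'n) monoid_scheme \<Rightarrow> 'b \<Rightarrow> ('a + 'b) list" where
  "fp_inr G H h = fp_red G H [Inr h]"

definition fp_lift :: "('c, 'm) monoid_scheme \<Rightarrow> ('a \<Rightarrow> 'c) \<Rightarrow> ('b \<Rightarrow> 'c) \<Rightarrow> ('a + 'b) list \<Rightarrow> 'c" where
  "fp_lift K \<phi> \<psi> w = foldr (\<lambda>x acc. (case x of Inl g \<Rightarrow> \<phi> g | Inr h \<Rightarrow> \<psi> h) \<otimes>\<^bsub>K\<^esub> acc) w \<one>\<^bsub>K\<^esub>"

text \<open>obj n is the group in cosimplicial degree n; coface n i : obj n \<rightarrow> obj (n+1)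
  is d^i (0 \<le> i \<le> n+1); codeg n i : obj (n+1) \<rightarrow> obj n is s^i (0 \<le> i \<le> n).\<close>
record 'a cosimp =
  obj :: "nat \<Rightarrow> 'a monoid"
  coface :: "nat \<Rightarrow> nat \<Rightarrow> 'a \<Rightarrow> 'a"
  codeg :: "nat \<Rightarrow> nat \<Rightarrow> 'a \<Rightarrow> 'a"

definition cosimp_group :: "'a cosimp \<Rightarrow> bool" where
  "cosimp_group X \<longleftrightarrow>
     (\<forall>n. group (obj X n)) \<and>
     (\<forall>n i. i \<le> Suc n \<longrightarrow> coface X n i \<in> hom (obj X n) (obj X (Suc n))) \<and>
     (\<forall>n i. i \<le> n \<longrightarrow> codeg X n i \<in> hom (obj X (Suc n)) (obj X n)) \<and>
     \<comment> \<open>d^j d^i = d^i d^(j-1) for i < j\<close>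
     (\<forall>n i j x. i < j \<and> j \<le> Suc (Suc n) \<and> x \<in> carrier (obj X n) \<longrightarrow>
        coface X (Suc n) j (coface X n i x) = coface X (Suc n) i (coface X n (j - 1) x)) \<and>
     \<comment> \<open>s^j d^i = d^i s^(j-1) for i < j\<close>
     (\<forall>n i j x. i < j \<and> j \<le> Suc n \<and> x \<in> carrier (obj X (Suc n)) \<longrightarrow>
        codeg X (Suc n) j (coface X (Suc n) i x) = coface X n i (codeg X n (j - 1) x)) \<and>
     \<comment> \<open>s^j d^j = id = s^j d^(j+1)\<close>
     (\<forall>n j x. j \<le> n \<and> x \<in> carrier (obj X n) \<longrightarrow>
        codeg X n j (coface X n j x) = x \<and> codeg X n j (coface X n (Suc j) x) = x) \<and>
     \<comment> \<open>s^j d^i = d^(i-1) s^j for i > j+1\<close>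
     (\<forall>n i j x. Suc j < i \<and> i \<le> Suc (Suc n) \<and> x \<in> carrier (obj X (Suc n)) \<longrightarrow>
        codeg X (Suc n) j (coface X (Suc n) i x) = coface X n (i - 1) (codeg X n j x)) \<and>
     \<comment> \<open>s^j s^i = s^i s^(j+1) for i \<le> j\<close>
     (\<forall>n i j x. i \<le> j \<and> j \<le> n \<and> x \<in> carrier (obj X (Suc (Suc n))) \<longrightarrow>
        codeg X n j (codeg X (Suc n) i x) = codeg X n i (codeg X (Suc n) (Suc j) x))"

definition cosimp_hom :: "'a cosimp \<Rightarrow> 'b cosimp \<Rightarrow> (nat \<Rightarrow> 'a \<Rightarrow> 'b) \<Rightarrow> bool" where
  "cosimp_hom X Y f \<longleftrightarrow>
     (\<forall>n. f n \<in> hom (obj X n) (obj Y n)) \<and>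
     (\<forall>n i x. i \<le> Suc n \<and> x \<in> carrier (obj X n) \<longrightarrow>
        f (Suc n) (coface X n i x) = coface Y n i (f n x)) \<and>
     (\<forall>n i x. i \<le> n \<and> x \<in> carrier (obj X (Suc n)) \<longrightarrow>
        f n (codeg X n i x) = codeg Y n i (f (Suc n) x))"

definition Z1 :: "'a cosimp \<Rightarrow> 'a set" where
  "Z1 L = {b \<in> carrier (obj L 1).
      coface L 1 2 b \<otimes>\<^bsub>obj L 2\<^esub> coface L 1 0 b = coface L 1 1 b}"

text \<open>F_n is free on a_1, ..., a_n (a_j = gen j).\<close>

definition F_coface_gen :: "nat \<Rightarrow> nat \<Rightarrow> nat \<Rightarrow> (nat \<times> bool) list" where
  "F_coface_gen n i j =
     (if i = 0 then gen (Suc j)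
      else if i \<le> n then
        (if j < i then gen j else if j = i then [(i, True), (Suc i, True)] else gen (Suc j))
      else gen j)"

definition F_codeg_gen :: "nat \<Rightarrow> nat \<Rightarrow> (nat \<times> bool) list" where
  "F_codeg_gen i j = (if j \<le> i then gen j else if j = Suc i then [] else gen (j - 1))"

definition Fcs :: "(nat \<times> bool) list cosimp" where
  "Fcs = \<lparr>obj = (\<lambda>n. free_group {1..n}),
          coface = (\<lambda>n i. free_lift (free_group {1..Suc n}) (F_coface_gen n i)),
          codeg = (\<lambda>n i. free_lift (free_group {1..n}) (F_codeg_gen i))\<rparr>"

text \<open>The infinite cyclic group on a_0.\<close>
definition Fbar0 :: "(nat \<times> bool) list monoid" where
  "Fbar0 = free_group {0}"

fun bseq :: "'a cosimp \<Rightarrow> 'a \<Rightarrow> nat \<Rightarrow> 'a" where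
  "bseq L b 0 = undefined"
| "bseq L b (Suc 0) = b"
| "bseq L b (Suc (Suc n)) = coface L (Suc n) (Suc (Suc n)) (bseq L b (Suc n))"

definition Lb_obj :: "'a cosimp \<Rightarrow> nat \<Rightarrow> ((nat \<times> bool) list + 'a) list monoid" where
  "Lb_obj L n = free_prod Fbar0 (obj L n)"

definition Lb :: "'a cosimp \<Rightarrow> 'a \<Rightarrow> ((nat \<times> bool) list + 'a) list cosimp" where
  "Lb L b = \<lparr>obj = Lb_obj L,
     coface = (\<lambda>n i. if i = 0 then
                 fp_lift (Lb_obj L (Suc n))
                   (free_lift (Lb_obj L (Suc n))
                      (\<lambda>_. fp_inl Fbar0 (obj L (Suc n)) (gen 0)
                           \<otimes>\<^bsub>Lb_obj L (Suc n)\<^esub> fp_inr Fbar0 (obj L (Suc n)) (bseq L b (Suc n))))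
                   (\<lambda>y. fp_inr Fbar0 (obj L (Suc n)) (coface L n 0 y))
               else
                 fp_lift (Lb_obj L (Suc n))
                   (fp_inl Fbar0 (obj L (Suc n)))
                   (\<lambda>y. fp_inr Fbar0 (obj L (Suc n)) (coface L n i y))),
     codeg = (\<lambda>n i. fp_lift (Lb_obj L n)
                   (fp_inl Fbar0 (obj L n))
                   (\<lambda>y. fp_inr Fbar0 (obj L n) (codeg L n i y)))\<rparr>"

definition iota :: "'a cosimp \<Rightarrow> nat \<Rightarrow> 'a \<Rightarrow> ((nat \<times> bool) list + 'a) list" where
  "iota L n = fp_inr Fbar0 (obj L n)"

text \<open>F^+ = F^(a_1), iota_+ = iota_(a_1).\<close>
definition Fplus :: "((nat \<times> bool) list + (nat \<times> bool) list) list cosimp" where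
  "Fplus = Lb Fcs (gen 1)"

definition iota_plus :: "nat \<Rightarrow> (nat \<times> bool) list \<Rightarrow> ((nat \<times> bool) list + (nat \<times> bool) list) list" where
  "iota_plus = iota Fcs"

definition idstar :: "'a cosimp \<Rightarrow> (nat \<Rightarrow> (nat \<times> bool) list \<Rightarrow> 'a) \<Rightarrow> nat
    \<Rightarrow> ((nat \<times> bool) list + (nat \<times> bool) list) list \<Rightarrow> ((nat \<times> bool) list + 'a) list" where
  "idstar L h n = fp_lift (Lb_obj L n) (fp_inl Fbar0 (obj L n)) (\<lambda>y. fp_inr Fbar0 (obj L n) (h n y))"

end

theory Submission
  imports Defs
begin

text \<open>Both L^b_n = Fbar_0 * L_n and F^+_n = Fbar_0 * F_n are generated by a_0 together with the second
  factor, so homomorphisms out of them are determined by, and can be freely prescribed on, these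
  generators. Given a cocone (f, g) on the square, the only candidate for the induced map L^b \<rightarrow> M
  is therefore f on Fbar_0 and g on L_n. It commutes with the cosimplicial operators on L_n because g
  does, and on a_0 the only non-trivial case is d^0 a_0 = a_0 b_(n+1): there it follows from
  h(b^F_(n+1)) = b_(n+1) and the compatibility f \<circ> \<iota>_+ = g \<circ> h. Likewise, the cosimplicial
  identities of L^b reduce on a_0 to identities for the sequence b_n, all consequences of the
  cocycle condition d^2 b \<cdot> d^0 b = d^1 b.\<close>

section \<open>Free groups\<close>

definition fg_cons :: "'g \<times> bool \<Rightarrow> ('g \<times> bool) list \<Rightarrow> ('g \<times> bool) list" where
  "fg_cons x r = (case r of [] \<Rightarrow> [x]
     | y # ys \<Rightarrow> (if fst y = fst x \<and> snd y \<noteq> snd x then ys else x # y # ys))"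

lemma fg_red_Cons: "fg_red (x # xs) = fg_cons x (fg_red xs)"
  by (simp add: fg_cons_def split: list.splits)

declare fg_red.simps(2)[simp del]

definition letter_inv :: "'g \<times> bool \<Rightarrow> 'g \<times> bool" where
  "letter_inv x = (fst x, \<not> snd x)"

lemma letter_inv_letter_inv [simp]: "letter_inv (letter_inv x) = x"
  by (simp add: letter_inv_def)

lemma length_fg_cons_le: "length (fg_cons x r) \<le> Suc (length r)"
  by (auto simp: fg_cons_def split: list.splits)

lemma fg_cons_eq_Cons_if_length: "length (fg_cons x r) = Suc (length r) \<Longrightarrow> fg_cons x r = x # r"
  by (auto simp: fg_cons_def split: list.splits if_splits)

lemma length_fg_red_le: "length (fg_red w) \<le> length w"
  by (induction w) (auto simp: fg_red_Cons intro: le_trans[OF length_fg_cons_le])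

lemma fg_red_Cons_reduced:
  assumes "fg_red (y # ys) = y # ys"
  shows "fg_red ys = ys \<and> fg_cons y ys = y # ys"
proof -
  have red: "fg_cons y (fg_red ys) = y # ys" using assms by (simp add: fg_red_Cons)
  with length_fg_cons_le[of y "fg_red ys"] length_fg_red_le[of ys]
  have "length (fg_cons y (fg_red ys)) = Suc (length (fg_red ys))" by simp
  from fg_cons_eq_Cons_if_length[OF this] red show ?thesis by simp
qed

lemma fg_red_fg_cons: "fg_red r = r \<Longrightarrow> fg_red (fg_cons x r) = fg_cons x r"
proof (cases r)
  case (Cons y ys)
  assume r: "fg_red r = r"
  show ?thesis
  proof (cases "fst y = fst x \<and> snd y \<noteq> snd x")
    case True
    then show ?thesis using Cons r fg_red_Cons_reduced[of y ys] by (simp add: fg_cons_def)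
  next
    case False
    then have "fg_cons x r = x # r" using Cons by (simp add: fg_cons_def)
    then show ?thesis using r by (simp add: fg_red_Cons)
  qed
qed (simp add: fg_cons_def fg_red_Cons)

lemma fg_red_idem [simp]: "fg_red (fg_red w) = fg_red w"
  by (induction w) (auto simp: fg_red_Cons fg_red_fg_cons)

lemma fg_cons_letter_inv:
  assumes "fg_red r = r"
  shows "fg_cons x (fg_cons (letter_inv x) r) = r"
proof (cases r)
  case (Cons y ys)
  show ?thesis
  proof (cases "y = x")
    case True
    with Cons assms fg_red_Cons_reduced[of y ys] show ?thesis
      by (simp add: fg_cons_def letter_inv_def)
  next
    case False
    then show ?thesis using Cons by (cases x; cases y) (auto simp: fg_cons_def letter_inv_def)
  qed
qed (simp add: fg_cons_def letter_inv_def)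

lemma fg_red_append_fg_red: "fg_red (xs @ fg_red ys) = fg_red (xs @ ys)"
  by (induction xs) (auto simp: fg_red_Cons)

lemma fg_red_fg_cons_append: "fg_red (fg_cons x t @ ys) = fg_cons x (fg_red (t @ ys))"
proof (cases t)
  case (Cons y t')
  show ?thesis
  proof (cases "fst y = fst x \<and> snd y \<noteq> snd x")
    case True
    then have "y = letter_inv x" by (cases x; cases y) (auto simp: letter_inv_def)
    have "fg_cons x (fg_red (t @ ys)) = fg_cons x (fg_cons (letter_inv x) (fg_red (t' @ ys)))"
      using Cons \<open>y = letter_inv x\<close> by (simp add: fg_red_Cons)
    also have "\<dots> = fg_red (t' @ ys)" by (rule fg_cons_letter_inv) simp
    finally show ?thesis using True Cons by (simp add: fg_cons_def)
  next
    case False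
    then have "fg_cons x t = x # t" using Cons by (simp add: fg_cons_def)
    then show ?thesis using fg_red_Cons[of x "t @ ys"] by simp
  qed
qed (simp add: fg_cons_def fg_red_Cons)

lemma fg_red_fg_red_append: "fg_red (fg_red xs @ ys) = fg_red (xs @ ys)"
  by (induction xs) (auto simp: fg_red_Cons fg_red_fg_cons_append)

lemma set_fg_red: "set (fg_red w) \<subseteq> set w"
proof (induction w)
  case (Cons x w)
  have "set (fg_cons x r) \<subseteq> insert x (set r)" for r
    by (auto simp: fg_cons_def split: list.splits)
  with Cons show ?case by (fastforce simp: fg_red_Cons)
qed simp

lemma fg_red_inverse_append: "fg_red (rev (map letter_inv w) @ w) = []"
proof (induction w)
  case (Cons a w)
  have "fg_red ([letter_inv a, a] @ w) = fg_red w"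
    using fg_cons_letter_inv[of "fg_red w" "letter_inv a"] by (simp add: fg_red_Cons)
  then have "fg_red (rev (map letter_inv w) @ ([letter_inv a, a] @ w)) = fg_red (rev (map letter_inv w) @ w)"
    by (metis fg_red_append_fg_red)
  with Cons show ?case by simp
qed simp

lemma free_group_simps:
  "carrier (free_group S) = {w. set w \<subseteq> S \<times> UNIV \<and> fg_red w = w}"
  "x \<otimes>\<^bsub>free_group S\<^esub> y = fg_red (x @ y)"
  "\<one>\<^bsub>free_group S\<^esub> = []"
  by (simp_all add: free_group_def)

lemma group_free_group: "group (free_group S)"
proof (rule groupI)
  fix x y assume "x \<in> carrier (free_group S)" "y \<in> carrier (free_group S)"
  then show "x \<otimes>\<^bsub>free_group S\<^esub> y \<in> carrier (free_group S)"
    using set_fg_red[of "x @ y"] by (auto simp: free_group_simps)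
next
  fix x y z
  show "x \<otimes>\<^bsub>free_group S\<^esub> y \<otimes>\<^bsub>free_group S\<^esub> z = x \<otimes>\<^bsub>free_group S\<^esub> (y \<otimes>\<^bsub>free_group S\<^esub> z)"
    by (simp add: free_group_simps fg_red_fg_red_append fg_red_append_fg_red)
next
  fix x assume x: "x \<in> carrier (free_group S)"
  have "set (rev (map letter_inv x)) \<subseteq> S \<times> UNIV" using x by (auto simp: free_group_simps letter_inv_def)
  then have "fg_red (rev (map letter_inv x)) \<in> carrier (free_group S)"
    using set_fg_red[of "rev (map letter_inv x)"] by (auto simp: free_group_simps)
  moreover have "fg_red (rev (map letter_inv x)) \<otimes>\<^bsub>free_group S\<^esub> x = \<one>\<^bsub>free_group S\<^esub>"
    by (simp add: free_group_simps fg_red_fg_red_append fg_red_inverse_append)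
  ultimately show "\<exists>y\<in>carrier (free_group S). y \<otimes>\<^bsub>free_group S\<^esub> x = \<one>\<^bsub>free_group S\<^esub>" ..
qed (auto simp: free_group_simps)

lemma gen_in_free_group: "g \<in> S \<Longrightarrow> gen g \<in> carrier (free_group S)"
  by (simp add: gen_def free_group_simps fg_red_Cons fg_cons_def)

definition letter_val :: "('a, 'm) monoid_scheme \<Rightarrow> ('g \<Rightarrow> 'a) \<Rightarrow> 'g \<times> bool \<Rightarrow> 'a" where
  "letter_val G \<phi> x = (if snd x then \<phi> (fst x) else inv\<^bsub>G\<^esub> (\<phi> (fst x)))"

lemma free_lift_Nil [simp]: "free_lift G \<phi> [] = \<one>\<^bsub>G\<^esub>"
  by (simp add: free_lift_def)

lemma free_lift_Cons: "free_lift G \<phi> (x # w) = letter_val G \<phi> x \<otimes>\<^bsub>G\<^esub> free_lift G \<phi> w"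
  by (cases x) (simp add: free_lift_def letter_val_def)

lemma free_lift_cong:
  "(\<And>g. g \<in> fst ` set w \<Longrightarrow> \<phi> g = \<psi> g) \<Longrightarrow> free_lift G \<phi> w = free_lift G \<psi> w"
  by (induction w) (auto simp: free_lift_Cons letter_val_def)

context
  fixes G :: "('a, 'm) monoid_scheme" and \<phi> :: "'g \<Rightarrow> 'a" and S :: "'g set"
  assumes G: "group G" and \<phi>: "\<And>g. g \<in> S \<Longrightarrow> \<phi> g \<in> carrier G"
begin

interpretation G: group G by (rule G)

lemma letter_val_closed: "fst x \<in> S \<Longrightarrow> letter_val G \<phi> x \<in> carrier G"
  using \<phi> by (simp add: letter_val_def)

lemma free_lift_closed: "set w \<subseteq> S \<times> UNIV \<Longrightarrow> free_lift G \<phi> w \<in> carrier G"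
  by (induction w) (auto simp: free_lift_Cons letter_val_closed)

lemma free_lift_append:
  "set xs \<subseteq> S \<times> UNIV \<Longrightarrow> set ys \<subseteq> S \<times> UNIV \<Longrightarrow>
   free_lift G \<phi> (xs @ ys) = free_lift G \<phi> xs \<otimes>\<^bsub>G\<^esub> free_lift G \<phi> ys"
  by (induction xs) (auto simp: free_lift_Cons letter_val_closed free_lift_closed G.m_assoc)

lemma free_lift_fg_cons:
  assumes "fst x \<in> S" "set t \<subseteq> S \<times> UNIV"
  shows "free_lift G \<phi> (fg_cons x t) = letter_val G \<phi> x \<otimes>\<^bsub>G\<^esub> free_lift G \<phi> t"
proof (cases t)
  case (Cons y ys)
  show ?thesis
  proof (cases "fst y = fst x \<and> snd y \<noteq> snd x")
    case True
    have ys: "set ys \<subseteq> S \<times> UNIV" using assms Cons by auto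
    have "letter_val G \<phi> x \<otimes>\<^bsub>G\<^esub> letter_val G \<phi> y = \<one>\<^bsub>G\<^esub>"
      using True assms \<phi> by (cases "snd x") (auto simp: letter_val_def)
    then have "letter_val G \<phi> x \<otimes>\<^bsub>G\<^esub> (letter_val G \<phi> y \<otimes>\<^bsub>G\<^esub> free_lift G \<phi> ys) = free_lift G \<phi> ys"
      using assms True Cons ys by (simp add: G.m_assoc[symmetric] letter_val_closed free_lift_closed)
    then show ?thesis using True Cons by (simp add: fg_cons_def free_lift_Cons)
  next
    case False
    then have "fg_cons x t = x # t" using Cons by (auto simp: fg_cons_def)
    then show ?thesis by (simp add: free_lift_Cons)
  qed
qed (use assms in \<open>simp add: fg_cons_def free_lift_Cons\<close>)

lemma free_lift_fg_red: "set w \<subseteq> S \<times> UNIV \<Longrightarrow> free_lift G \<phi> (fg_red w) = free_lift G \<phi> w"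
proof (induction w)
  case (Cons a w)
  have "set (fg_red w) \<subseteq> S \<times> UNIV" "fst a \<in> S" using Cons.prems set_fg_red[of w] by auto
  with Cons show ?case by (simp add: fg_red_Cons free_lift_fg_cons free_lift_Cons)
qed simp

lemma free_lift_hom: "free_lift G \<phi> \<in> hom (free_group S) G"
  by (rule homI) (simp_all add: free_group_simps free_lift_closed free_lift_fg_red free_lift_append)

lemma free_lift_gen: "g \<in> S \<Longrightarrow> free_lift G \<phi> (gen g) = \<phi> g"
  by (simp add: gen_def free_lift_Cons letter_val_def \<phi>)

end

lemma hom_free_group_eq_free_lift:
  assumes G: "group G" and f: "f \<in> hom (free_group S) G" and w: "w \<in> carrier (free_group S)"
  shows "f w = free_lift G (\<lambda>g. f (gen g)) w"
  using w
proof (induction w)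
  case Nil
  show ?case using hom_one[OF f group_free_group G] by (simp add: free_group_simps)
next
  case (Cons x w)
  interpret F: group "free_group S" by (rule group_free_group)
  have red: "fg_red (x # w) = x # w" and xS: "fst x \<in> S" and wS: "set w \<subseteq> S \<times> UNIV"
    using Cons.prems by (auto simp: free_group_simps)
  from fg_red_Cons_reduced[OF red] have wred: "fg_red w = w" and fx: "fg_cons x w = x # w" by auto
  have wc: "w \<in> carrier (free_group S)" using wred wS by (simp add: free_group_simps)
  have xc: "[x] \<in> carrier (free_group S)"
    using xS by (cases x) (simp add: free_group_simps fg_red_Cons fg_cons_def)
  have gc: "gen (fst x) \<in> carrier (free_group S)" using xS by (rule gen_in_free_group)
  have "[x] = (if snd x then gen (fst x) else inv\<^bsub>free_group S\<^esub> (gen (fst x)))"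
  proof (cases "snd x")
    case False
    then have "[x] \<otimes>\<^bsub>free_group S\<^esub> gen (fst x) = \<one>\<^bsub>free_group S\<^esub>"
      by (cases x) (simp add: gen_def free_group_simps fg_red_Cons fg_cons_def)
    with False gc xc show ?thesis by (simp add: F.inv_equality)
  qed (cases x, simp add: gen_def)
  moreover have "f (inv\<^bsub>free_group S\<^esub> (gen (fst x))) = inv\<^bsub>G\<^esub> f (gen (fst x))"
    using gc f G group_free_group by (simp add: group_hom.hom_inv group_hom_def group_hom_axioms_def)
  ultimately have fx1: "f [x] = letter_val G (\<lambda>g. f (gen g)) x"
    by (simp add: letter_val_def)
  have "x # w = [x] \<otimes>\<^bsub>free_group S\<^esub> w"
    using fx wred by (simp add: free_group_simps fg_red_Cons)
  then have "f (x # w) = f [x] \<otimes>\<^bsub>G\<^esub> f w" using xc wc f by (simp add: hom_mult)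
  also have "\<dots> = free_lift G (\<lambda>g. f (gen g)) (x # w)"
    using fx1 Cons.IH[OF wc] by (simp add: free_lift_Cons)
  finally show ?case .
qed

lemma free_group_hom_ext:
  assumes "group G" "f \<in> hom (free_group S) G" "f' \<in> hom (free_group S) G"
    and "\<And>g. g \<in> S \<Longrightarrow> f (gen g) = f' (gen g)" and "w \<in> carrier (free_group S)"
  shows "f w = f' w"
proof -
  have "free_lift G (\<lambda>g. f (gen g)) w = free_lift G (\<lambda>g. f' (gen g)) w"
    using assms(4,5) by (intro free_lift_cong) (auto simp: free_group_simps)
  then show ?thesis using hom_free_group_eq_free_lift assms by metis
qed

lemma free_group_hom_comp_ext:
  assumes "group K" "f \<in> hom (free_group S) H" "g \<in> hom H K" "f' \<in> hom (free_group S) H'" "g' \<in> hom H' K"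
    and "\<And>s. s \<in> S \<Longrightarrow> g (f (gen s)) = g' (f' (gen s))" and "w \<in> carrier (free_group S)"
  shows "g (f w) = g' (f' w)"
  using free_group_hom_ext[OF assms(1) hom_compose[OF assms(2,3)] hom_compose[OF assms(4,5)]] assms(6,7)
  by simp

lemma free_group_hom_eq_id:
  assumes "f \<in> hom (free_group S) H" "g \<in> hom H (free_group S)"
    and "\<And>s. s \<in> S \<Longrightarrow> g (f (gen s)) = gen s" and "w \<in> carrier (free_group S)"
  shows "g (f w) = w"
  using free_group_hom_ext[OF group_free_group hom_compose[OF assms(1,2)] iso_imp_homomorphism[OF id_iso]]
    assms(3,4) by simp

section \<open>Free products\<close>

lemma length_fp_merge_le: "length (fp_merge G H x r) \<le> Suc (length r)"
  by (cases "(G, H, x, r)" rule: fp_merge.cases) auto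

lemma fp_merge_eq_Cons_if_length:
  "length (fp_merge G H x r) = Suc (length r) \<Longrightarrow> fp_merge G H x r = x # r"
  by (cases "(G, H, x, r)" rule: fp_merge.cases) (auto split: if_splits)

lemma length_fp_red_le: "length (fp_red G H w) \<le> length w"
  by (induction w) (auto intro: le_trans[OF length_fp_merge_le])

lemma fp_red_Cons_reduced:
  assumes "fp_red G H (y # ys) = y # ys"
  shows "fp_red G H ys = ys \<and> fp_merge G H y ys = y # ys"
proof -
  have red: "fp_merge G H y (fp_red G H ys) = y # ys" using assms by simp
  with length_fp_merge_le[of G H y "fp_red G H ys"] length_fp_red_le[of G H ys]
  have "length (fp_merge G H y (fp_red G H ys)) = Suc (length (fp_red G H ys))" by simp
  from fp_merge_eq_Cons_if_length[OF this] red show ?thesis by simp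
qed

lemma fp_merge_Inl_eq_Cons:
  "fp_merge G H (Inl g) ys = Inl g # ys \<Longrightarrow> g \<noteq> \<one>\<^bsub>G\<^esub> \<and> (\<forall>g' ys'. ys \<noteq> Inl g' # ys')"
  by (cases "(G, H, Inl g :: 'a + 'b, ys)" rule: fp_merge.cases) (auto split: if_splits)

lemma fp_merge_Inr_eq_Cons:
  "fp_merge G H (Inr h) ys = Inr h # ys \<Longrightarrow> h \<noteq> \<one>\<^bsub>H\<^esub> \<and> (\<forall>h' ys'. ys \<noteq> Inr h' # ys')"
  by (cases "(G, H, Inr h :: 'a + 'b, ys)" rule: fp_merge.cases) (auto split: if_splits)

lemma fp_merge_Inl_not_Inl:
  assumes "\<forall>g' ys'. ys \<noteq> Inl g' # ys'"
  shows "fp_merge G H (Inl g) ys = (if g = \<one>\<^bsub>G\<^esub> then ys else Inl g # ys)"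
proof (cases ys)
  case (Cons y ys')
  with assms show ?thesis by (cases y) auto
qed simp

lemma fp_merge_Inr_not_Inr:
  assumes "\<forall>h' ys'. ys \<noteq> Inr h' # ys'"
  shows "fp_merge G H (Inr h) ys = (if h = \<one>\<^bsub>H\<^esub> then ys else Inr h # ys)"
proof (cases ys)
  case (Cons y ys')
  with assms show ?thesis by (cases y) auto
qed simp

lemma fp_red_fp_merge:
  assumes r: "fp_red G H r = r"
  shows "fp_red G H (fp_merge G H x r) = fp_merge G H x r"
proof (cases r)
  case (Cons y ys)
  from fp_red_Cons_reduced[of G H y ys] r Cons
  have ys: "fp_red G H ys = ys" "fp_merge G H y ys = y # ys" by auto
  show ?thesis
  proof (cases x; cases y)
    fix g g' assume "x = Inl g" "y = Inl g'"
    with ys Cons r fp_merge_Inl_not_Inl[of ys G H] fp_merge_Inl_eq_Cons[of G H g' ys]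
    show ?thesis by auto
  next
    fix h h' assume "x = Inr h" "y = Inr h'"
    with ys Cons r fp_merge_Inr_not_Inr[of ys G H] fp_merge_Inr_eq_Cons[of G H h' ys]
    show ?thesis by auto
  qed (use Cons r in auto)
qed (cases x; simp)

lemma fp_red_idem [simp]: "fp_red G H (fp_red G H w) = fp_red G H w"
  by (induction w) (auto simp: fp_red_fp_merge)

lemma fp_red_append_fp_red: "fp_red G H (xs @ fp_red G H ys) = fp_red G H (xs @ ys)"
  by (induction xs) auto

lemma fp_merge_Inl_one: "fp_merge G H (Inl \<one>\<^bsub>G\<^esub>) r = r"
  by (cases "(G, H, Inl \<one>\<^bsub>G\<^esub> :: 'a + 'b, r)" rule: fp_merge.cases) auto

lemma fp_merge_Inr_one: "fp_merge G H (Inr \<one>\<^bsub>H\<^esub>) r = r"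
  by (cases "(G, H, Inr \<one>\<^bsub>H\<^esub> :: 'a + 'b, r)" rule: fp_merge.cases) auto

definition fp_word :: "('a, 'm) monoid_scheme \<Rightarrow> ('b, 'n) monoid_scheme \<Rightarrow> ('a + 'b) list \<Rightarrow> bool" where
  "fp_word G H w \<longleftrightarrow> set w \<subseteq> Inl ` carrier G \<union> Inr ` carrier H"

lemma fp_word_simps [simp]:
  "fp_word G H []"
  "fp_word G H (Inl g # w) \<longleftrightarrow> g \<in> carrier G \<and> fp_word G H w"
  "fp_word G H (Inr h # w) \<longleftrightarrow> h \<in> carrier H \<and> fp_word G H w"
  "fp_word G H (xs @ ys) \<longleftrightarrow> fp_word G H xs \<and> fp_word G H ys"
  "fp_word G H (rev w) \<longleftrightarrow> fp_word G H w"
  by (auto simp: fp_word_def)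

lemma fp_word_ConsD: "fp_word G H (x # w) \<Longrightarrow> fp_word G H [x] \<and> fp_word G H w"
  by (cases x) auto

lemma free_prod_simps:
  "carrier (free_prod G H) = {w. fp_word G H w \<and> fp_red G H w = w}"
  "x \<otimes>\<^bsub>free_prod G H\<^esub> y = fp_red G H (x @ y)"
  "\<one>\<^bsub>free_prod G H\<^esub> = []"
  by (simp_all add: free_prod_def fp_word_def)

fun fp_letter_inv :: "('a, 'm) monoid_scheme \<Rightarrow> ('b, 'n) monoid_scheme \<Rightarrow> 'a + 'b \<Rightarrow> 'a + 'b" where
  "fp_letter_inv G H (Inl g) = Inl (inv\<^bsub>G\<^esub> g)"
| "fp_letter_inv G H (Inr h) = Inr (inv\<^bsub>H\<^esub> h)"

context
  fixes G :: "('a, 'm) monoid_scheme" and H :: "('b, 'n) monoid_scheme"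
  assumes G: "group G" and H: "group H"
begin

interpretation G: group G by (rule G)
interpretation H: group H by (rule H)

lemma fp_word_fp_merge: "fp_word G H [x] \<Longrightarrow> fp_word G H r \<Longrightarrow> fp_word G H (fp_merge G H x r)"
  by (cases "(G, H, x, r)" rule: fp_merge.cases) auto

lemma fp_word_fp_red: "fp_word G H w \<Longrightarrow> fp_word G H (fp_red G H w)"
  by (induction w) (auto dest: fp_word_ConsD intro!: fp_word_fp_merge)

lemma fp_merge_Inl_Inl:
  assumes g: "g \<in> carrier G" "g' \<in> carrier G" and r: "fp_red G H r = r" "fp_word G H r"
  shows "fp_merge G H (Inl g) (fp_merge G H (Inl g') r) = fp_merge G H (Inl (g \<otimes>\<^bsub>G\<^esub> g')) r"
proof (cases r)
  case (Cons y ys)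
  from fp_red_Cons_reduced[of G H y ys] r Cons have ys: "fp_merge G H y ys = y # ys" by auto
  show ?thesis
  proof (cases y)
    case (Inl g'')
    from fp_merge_Inl_eq_Cons[OF ys[unfolded Inl]]
    have ne: "g'' \<noteq> \<one>\<^bsub>G\<^esub>" and not_Inl: "\<forall>c ys'. ys \<noteq> Inl c # ys'" by blast+
    note m = fp_merge_Inl_not_Inl[OF not_Inl, of G H]
    have g'': "g'' \<in> carrier G" using r Cons Inl by simp
    have "g \<otimes>\<^bsub>G\<^esub> g' = \<one>\<^bsub>G\<^esub> \<Longrightarrow> g' \<otimes>\<^bsub>G\<^esub> g'' = \<one>\<^bsub>G\<^esub> \<Longrightarrow> g = g''"
      using g g'' by (metis G.l_one G.r_one G.m_assoc)
    moreover have "g \<otimes>\<^bsub>G\<^esub> g' = \<one>\<^bsub>G\<^esub> \<Longrightarrow> g \<otimes>\<^bsub>G\<^esub> (g' \<otimes>\<^bsub>G\<^esub> g'') = g''"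
      using g g'' by (simp flip: G.m_assoc)
    ultimately show ?thesis using Cons Inl g g'' ne by (auto simp: m G.m_assoc)
  qed (use Cons g in \<open>auto simp: G.m_assoc\<close>)
qed (use g in auto)

lemma fp_merge_Inr_Inr:
  assumes h: "h \<in> carrier H" "h' \<in> carrier H" and r: "fp_red G H r = r" "fp_word G H r"
  shows "fp_merge G H (Inr h) (fp_merge G H (Inr h') r) = fp_merge G H (Inr (h \<otimes>\<^bsub>H\<^esub> h')) r"
proof (cases r)
  case (Cons y ys)
  from fp_red_Cons_reduced[of G H y ys] r Cons have ys: "fp_merge G H y ys = y # ys" by auto
  show ?thesis
  proof (cases y)
    case (Inr h'')
    from fp_merge_Inr_eq_Cons[OF ys[unfolded Inr]]
    have ne: "h'' \<noteq> \<one>\<^bsub>H\<^esub>" and not_Inr: "\<forall>c ys'. ys \<noteq> Inr c # ys'" by blast+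
    note m = fp_merge_Inr_not_Inr[OF not_Inr, of G H]
    have h'': "h'' \<in> carrier H" using r Cons Inr by simp
    have "h \<otimes>\<^bsub>H\<^esub> h' = \<one>\<^bsub>H\<^esub> \<Longrightarrow> h' \<otimes>\<^bsub>H\<^esub> h'' = \<one>\<^bsub>H\<^esub> \<Longrightarrow> h = h''"
      using h h'' by (metis H.l_one H.r_one H.m_assoc)
    moreover have "h \<otimes>\<^bsub>H\<^esub> h' = \<one>\<^bsub>H\<^esub> \<Longrightarrow> h \<otimes>\<^bsub>H\<^esub> (h' \<otimes>\<^bsub>H\<^esub> h'') = h''"
      using h h'' by (simp flip: H.m_assoc)
    ultimately show ?thesis using Cons Inr h h'' ne by (auto simp: m H.m_assoc)
  qed (use Cons h in \<open>auto simp: H.m_assoc\<close>)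
qed (use h in auto)

lemma fp_red_fp_merge_append:
  assumes x: "fp_word G H [x]" and t: "fp_word G H t" "fp_red G H t = t" and ys: "fp_word G H ys"
  shows "fp_red G H (fp_merge G H x t @ ys) = fp_merge G H x (fp_red G H (t @ ys))"
proof (cases t)
  case Nil
  then show ?thesis using x by (cases x) (auto simp: fp_merge_Inl_one fp_merge_Inr_one)
next
  case (Cons y t')
  have "fp_word G H t'" using t Cons by (simp add: fp_word_ConsD)
  then have rest: "fp_word G H (fp_red G H (t' @ ys))" "fp_red G H (fp_red G H (t' @ ys)) = fp_red G H (t' @ ys)"
    using ys by (simp_all add: fp_word_fp_red)
  show ?thesis
  proof (cases x; cases y)
    fix g g' assume xy: "x = Inl g" "y = Inl g'"
    then have "g \<in> carrier G" "g' \<in> carrier G" using x t Cons by auto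
    from fp_merge_Inl_Inl[OF this rest(2,1)] show ?thesis
      using xy Cons by (auto simp: fp_merge_Inl_one)
  next
    fix h h' assume xy: "x = Inr h" "y = Inr h'"
    then have "h \<in> carrier H" "h' \<in> carrier H" using x t Cons by auto
    from fp_merge_Inr_Inr[OF this rest(2,1)] show ?thesis
      using xy Cons by (auto simp: fp_merge_Inr_one)
  qed (use Cons in \<open>auto simp: fp_merge_Inl_one fp_merge_Inr_one\<close>)
qed

lemma fp_red_fp_red_append:
  "fp_word G H xs \<Longrightarrow> fp_word G H ys \<Longrightarrow> fp_red G H (fp_red G H xs @ ys) = fp_red G H (xs @ ys)"
proof (induction xs)
  case (Cons x xs)
  then have "fp_word G H [x]" "fp_word G H xs" by (simp_all add: fp_word_ConsD)
  with Cons show ?case by (simp add: fp_red_fp_merge_append fp_word_fp_red)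
qed simp

lemma fp_red_inverse_append:
  "fp_word G H w \<Longrightarrow> fp_red G H (rev (map (fp_letter_inv G H) w) @ w) = []"
proof (induction w)
  case (Cons a w)
  have w: "fp_word G H w" using Cons.prems by (simp add: fp_word_ConsD)
  have "fp_red G H ([fp_letter_inv G H a, a] @ w) = fp_red G H w"
  proof (cases a)
    case (Inl g)
    then show ?thesis using Cons.prems w fp_merge_Inl_Inl[of "inv\<^bsub>G\<^esub> g" g "fp_red G H w"]
      by (simp add: fp_merge_Inl_one fp_word_fp_red)
  next
    case (Inr h)
    then show ?thesis using Cons.prems w fp_merge_Inr_Inr[of "inv\<^bsub>H\<^esub> h" h "fp_red G H w"]
      by (simp add: fp_merge_Inr_one fp_word_fp_red)
  qed
  then have "fp_red G H (rev (map (fp_letter_inv G H) w) @ ([fp_letter_inv G H a, a] @ w))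
      = fp_red G H (rev (map (fp_letter_inv G H) w) @ w)"
    by (metis fp_red_append_fp_red)
  with Cons w show ?case by simp
qed simp

lemma fp_word_letter_inv: "fp_word G H w \<Longrightarrow> fp_word G H (map (fp_letter_inv G H) w)"
proof (induction w)
  case (Cons a w) then show ?case by (cases a) auto
qed simp

lemma group_free_prod: "group (free_prod G H)"
proof (rule groupI)
  fix x y assume "x \<in> carrier (free_prod G H)" "y \<in> carrier (free_prod G H)"
  then show "x \<otimes>\<^bsub>free_prod G H\<^esub> y \<in> carrier (free_prod G H)"
    by (simp add: free_prod_simps fp_word_fp_red)
next
  fix x y z assume "x \<in> carrier (free_prod G H)" "y \<in> carrier (free_prod G H)" "z \<in> carrier (free_prod G H)"
  then show "x \<otimes>\<^bsub>free_prod G H\<^esub> y \<otimes>\<^bsub>free_prod G H\<^esub> z = x \<otimes>\<^bsub>free_prod G H\<^esub> (y \<otimes>\<^bsub>free_prod G H\<^esub> z)"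
    by (simp add: free_prod_simps fp_red_fp_red_append fp_red_append_fp_red)
next
  fix x assume "x \<in> carrier (free_prod G H)"
  then have x: "fp_word G H x" "fp_word G H (rev (map (fp_letter_inv G H) x))"
    by (simp_all add: free_prod_simps fp_word_letter_inv)
  then have "fp_red G H (rev (map (fp_letter_inv G H) x)) \<otimes>\<^bsub>free_prod G H\<^esub> x = \<one>\<^bsub>free_prod G H\<^esub>"
    by (simp add: free_prod_simps fp_red_fp_red_append fp_red_inverse_append)
  moreover have "fp_red G H (rev (map (fp_letter_inv G H) x)) \<in> carrier (free_prod G H)"
    using x by (simp add: free_prod_simps fp_word_fp_red)
  ultimately show "\<exists>y\<in>carrier (free_prod G H). y \<otimes>\<^bsub>free_prod G H\<^esub> x = \<one>\<^bsub>free_prod G H\<^esub>" by blast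
qed (simp_all add: free_prod_simps)

end

lemma fp_lift_Nil [simp]: "fp_lift K \<phi> \<psi> [] = \<one>\<^bsub>K\<^esub>"
  by (simp add: fp_lift_def)

lemma fp_lift_Cons: "fp_lift K \<phi> \<psi> (x # w) = case_sum \<phi> \<psi> x \<otimes>\<^bsub>K\<^esub> fp_lift K \<phi> \<psi> w"
  by (cases x) (simp_all add: fp_lift_def)

lemma fp_lift_cong:
  "(\<And>g. Inl g \<in> set w \<Longrightarrow> \<phi> g = \<phi>' g) \<Longrightarrow> (\<And>h. Inr h \<in> set w \<Longrightarrow> \<psi> h = \<psi>' h) \<Longrightarrow>
   fp_lift K \<phi> \<psi> w = fp_lift K \<phi>' \<psi>' w"
proof (induction w)
  case (Cons x w) then show ?case by (cases x) (auto simp: fp_lift_Cons)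
qed simp

lemma fp_inl_eq: "fp_inl G H g = (if g = \<one>\<^bsub>G\<^esub> then [] else [Inl g])"
  by (simp add: fp_inl_def)

lemma fp_inr_eq: "fp_inr G H h = (if h = \<one>\<^bsub>H\<^esub> then [] else [Inr h])"
  by (simp add: fp_inr_def)

context
  fixes G :: "('a, 'm) monoid_scheme" and H :: "('b, 'n) monoid_scheme"
  assumes G: "group G" and H: "group H"
begin

interpretation G: group G by (rule G)
interpretation H: group H by (rule H)

lemma fp_inl_hom: "fp_inl G H \<in> hom G (free_prod G H)"
proof (rule homI)
  fix x y assume xy: "x \<in> carrier G" "y \<in> carrier G"
  have "fp_red G H (fp_inl G H x @ fp_inl G H y) = fp_merge G H (Inl x) (fp_merge G H (Inl y) [])"
    using xy by (simp add: fp_inl_def fp_red_fp_red_append[OF G H])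
  also have "\<dots> = fp_inl G H (x \<otimes>\<^bsub>G\<^esub> y)"
    using xy by (simp add: fp_merge_Inl_Inl[OF G H] fp_inl_def)
  finally show "fp_inl G H (x \<otimes>\<^bsub>G\<^esub> y) = fp_inl G H x \<otimes>\<^bsub>free_prod G H\<^esub> fp_inl G H y"
    by (simp add: free_prod_simps)
qed (simp add: fp_inl_eq free_prod_simps)

lemma fp_inr_hom: "fp_inr G H \<in> hom H (free_prod G H)"
proof (rule homI)
  fix x y assume xy: "x \<in> carrier H" "y \<in> carrier H"
  have "fp_red G H (fp_inr G H x @ fp_inr G H y) = fp_merge G H (Inr x) (fp_merge G H (Inr y) [])"
    using xy by (simp add: fp_inr_def fp_red_fp_red_append[OF G H])
  also have "\<dots> = fp_inr G H (x \<otimes>\<^bsub>H\<^esub> y)"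
    using xy by (simp add: fp_merge_Inr_Inr[OF G H] fp_inr_def)
  finally show "fp_inr G H (x \<otimes>\<^bsub>H\<^esub> y) = fp_inr G H x \<otimes>\<^bsub>free_prod G H\<^esub> fp_inr G H y"
    by (simp add: free_prod_simps)
qed (simp add: fp_inr_eq free_prod_simps)

context
  fixes K :: "('c, 'k) monoid_scheme" and \<phi> \<psi>
  assumes K: "group K" and \<phi>: "\<phi> \<in> hom G K" and \<psi>: "\<psi> \<in> hom H K"
begin

interpretation K: group K by (rule K)

lemma fp_lift_closed: "fp_word G H w \<Longrightarrow> fp_lift K \<phi> \<psi> w \<in> carrier K"
proof (induction w)
  case (Cons x w) then show ?case
    by (cases x) (auto simp: fp_lift_Cons intro: hom_in_carrier[OF \<phi>] hom_in_carrier[OF \<psi>])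
qed simp

lemma fp_lift_append:
  "fp_word G H xs \<Longrightarrow> fp_word G H ys \<Longrightarrow>
   fp_lift K \<phi> \<psi> (xs @ ys) = fp_lift K \<phi> \<psi> xs \<otimes>\<^bsub>K\<^esub> fp_lift K \<phi> \<psi> ys"
proof (induction xs)
  case (Cons x xs)
  then show ?case
    by (cases x) (auto simp: fp_lift_Cons K.m_assoc fp_lift_closed hom_in_carrier[OF \<phi>] hom_in_carrier[OF \<psi>])
qed (simp add: fp_lift_closed)

lemma fp_lift_fp_merge:
  assumes "fp_word G H [x]" "fp_word G H t"
  shows "fp_lift K \<phi> \<psi> (fp_merge G H x t) = case_sum \<phi> \<psi> x \<otimes>\<^bsub>K\<^esub> fp_lift K \<phi> \<psi> t"
proof -
  have \<phi>c: "\<phi> g \<in> carrier K" if "g \<in> carrier G" for g using that hom_in_carrier[OF \<phi>] by blast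
  have \<psi>c: "\<psi> h \<in> carrier K" if "h \<in> carrier H" for h using that hom_in_carrier[OF \<psi>] by blast
  have \<phi>_inv: "\<phi> g \<otimes>\<^bsub>K\<^esub> \<phi> g' = \<one>\<^bsub>K\<^esub>"
    if "g \<otimes>\<^bsub>G\<^esub> g' = \<one>\<^bsub>G\<^esub>" "g \<in> carrier G" "g' \<in> carrier G" for g g'
    using that by (metis hom_mult[OF \<phi>] hom_one[OF \<phi> G K])
  have \<psi>_inv: "\<psi> h \<otimes>\<^bsub>K\<^esub> \<psi> h' = \<one>\<^bsub>K\<^esub>"
    if "h \<otimes>\<^bsub>H\<^esub> h' = \<one>\<^bsub>H\<^esub>" "h \<in> carrier H" "h' \<in> carrier H" for h h'
    using that by (metis hom_mult[OF \<psi>] hom_one[OF \<psi> H K])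
  note hom_facts = \<phi>_inv \<psi>_inv hom_one[OF \<phi> G K] hom_one[OF \<psi> H K] hom_mult[OF \<phi>] hom_mult[OF \<psi>]
  show ?thesis using assms
    by (cases "(G, H, x, t)" rule: fp_merge.cases)
      (auto simp: fp_lift_Cons hom_facts \<phi>c \<psi>c fp_lift_closed K.m_assoc simp flip: K.m_assoc)
qed

lemma fp_lift_fp_red: "fp_word G H w \<Longrightarrow> fp_lift K \<phi> \<psi> (fp_red G H w) = fp_lift K \<phi> \<psi> w"
proof (induction w)
  case (Cons x w)
  then have "fp_word G H [x]" "fp_word G H w" by (simp_all add: fp_word_ConsD)
  with Cons.IH show ?case by (simp add: fp_lift_Cons fp_lift_fp_merge fp_word_fp_red[OF G H])
qed simp

lemma fp_lift_hom: "fp_lift K \<phi> \<psi> \<in> hom (free_prod G H) K"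
  by (rule homI) (simp_all add: free_prod_simps fp_lift_closed fp_lift_fp_red fp_lift_append)

lemma fp_lift_inl: "g \<in> carrier G \<Longrightarrow> fp_lift K \<phi> \<psi> (fp_inl G H g) = \<phi> g"
  using hom_one[OF \<phi> G K] hom_in_carrier[OF \<phi>] by (auto simp: fp_inl_eq fp_lift_Cons)

lemma fp_lift_inr: "h \<in> carrier H \<Longrightarrow> fp_lift K \<phi> \<psi> (fp_inr G H h) = \<psi> h"
  using hom_one[OF \<psi> H K] hom_in_carrier[OF \<psi>] by (auto simp: fp_inr_eq fp_lift_Cons)

end

lemma hom_free_prod_eq_fp_lift:
  assumes K: "group K" and f: "f \<in> hom (free_prod G H) K" and w: "w \<in> carrier (free_prod G H)"
  shows "f w = fp_lift K (\<lambda>g. f (fp_inl G H g)) (\<lambda>h. f (fp_inr G H h)) w"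
  using w
proof (induction w)
  case Nil
  show ?case using hom_one[OF f group_free_prod[OF G H] K] by (simp add: free_prod_simps)
next
  case (Cons x w)
  have red: "fp_red G H (x # w) = x # w" and x: "fp_word G H [x]" and "fp_word G H w"
    using Cons.prems by (auto simp: free_prod_simps dest: fp_word_ConsD)
  from fp_red_Cons_reduced[OF red] have wred: "fp_red G H w = w" and fx: "fp_merge G H x w = x # w" by auto
  have wc: "w \<in> carrier (free_prod G H)" using wred \<open>fp_word G H w\<close> by (simp add: free_prod_simps)
  have x_eq: "[x] = case_sum (fp_inl G H) (fp_inr G H) x"
    using fx by (cases x) (auto simp: fp_inl_eq fp_inr_eq dest: fp_merge_Inl_eq_Cons fp_merge_Inr_eq_Cons)
  have xc: "[x] \<in> carrier (free_prod G H)"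
    using x x_eq hom_in_carrier[OF fp_inl_hom] hom_in_carrier[OF fp_inr_hom] by (cases x) auto
  have "x # w = [x] \<otimes>\<^bsub>free_prod G H\<^esub> w"
    using fx wred by (simp add: free_prod_simps)
  then have "f (x # w) = f [x] \<otimes>\<^bsub>K\<^esub> f w" using xc wc f by (simp add: hom_mult)
  also have "\<dots> = fp_lift K (\<lambda>g. f (fp_inl G H g)) (\<lambda>h. f (fp_inr G H h)) (x # w)"
    using x_eq Cons.IH[OF wc] by (cases x) (simp_all add: fp_lift_Cons)
  finally show ?case .
qed

lemma free_prod_hom_ext:
  assumes "group K" "f \<in> hom (free_prod G H) K" "f' \<in> hom (free_prod G H) K"
    and "\<And>g. g \<in> carrier G \<Longrightarrow> f (fp_inl G H g) = f' (fp_inl G H g)"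
    and "\<And>h. h \<in> carrier H \<Longrightarrow> f (fp_inr G H h) = f' (fp_inr G H h)"
    and "w \<in> carrier (free_prod G H)"
  shows "f w = f' w"
proof -
  have "fp_lift K (\<lambda>g. f (fp_inl G H g)) (\<lambda>h. f (fp_inr G H h)) w
      = fp_lift K (\<lambda>g. f' (fp_inl G H g)) (\<lambda>h. f' (fp_inr G H h)) w"
    using assms(4-6) by (intro fp_lift_cong) (auto simp: free_prod_simps fp_word_def)
  then show ?thesis using hom_free_prod_eq_fp_lift assms(1-3,6) by metis
qed

end

section \<open>Cosimplicial groups\<close>

lemma cosimp_groupI:
  assumes "\<And>n. group (obj X n)"
    and "\<And>n i. i \<le> Suc n \<Longrightarrow> coface X n i \<in> hom (obj X n) (obj X (Suc n))"
    and "\<And>n i. i \<le> n \<Longrightarrow> codeg X n i \<in> hom (obj X (Suc n)) (obj X n)"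
    and "\<And>n i j x. i < j \<Longrightarrow> j \<le> Suc (Suc n) \<Longrightarrow> x \<in> carrier (obj X n) \<Longrightarrow>
           coface X (Suc n) j (coface X n i x) = coface X (Suc n) i (coface X n (j - 1) x)"
    and "\<And>n i j x. i < j \<Longrightarrow> j \<le> Suc n \<Longrightarrow> x \<in> carrier (obj X (Suc n)) \<Longrightarrow>
           codeg X (Suc n) j (coface X (Suc n) i x) = coface X n i (codeg X n (j - 1) x)"
    and "\<And>n j x. j \<le> n \<Longrightarrow> x \<in> carrier (obj X n) \<Longrightarrow> codeg X n j (coface X n j x) = x"
    and "\<And>n j x. j \<le> n \<Longrightarrow> x \<in> carrier (obj X n) \<Longrightarrow> codeg X n j (coface X n (Suc j) x) = x"
    and "\<And>n i j x. Suc j < i \<Longrightarrow> i \<le> Suc (Suc n) \<Longrightarrow> x \<in> carrier (obj X (Suc n)) \<Longrightarrow>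
           codeg X (Suc n) j (coface X (Suc n) i x) = coface X n (i - 1) (codeg X n j x)"
    and "\<And>n i j x. i \<le> j \<Longrightarrow> j \<le> n \<Longrightarrow> x \<in> carrier (obj X (Suc (Suc n))) \<Longrightarrow>
           codeg X n j (codeg X (Suc n) i x) = codeg X n i (codeg X (Suc n) (Suc j) x)"
  shows "cosimp_group X"
  unfolding cosimp_group_def by (intro conjI allI impI; (elim conjE)?; simp add: assms)

locale cosimplicial_group =
  fixes X :: "'a cosimp"
  assumes cosimp_group_X: "cosimp_group X"
begin

lemma group_obj [simp]: "group (obj X n)"
  using cosimp_group_X by (simp add: cosimp_group_def)

lemma coface_hom: "i \<le> Suc n \<Longrightarrow> coface X n i \<in> hom (obj X n) (obj X (Suc n))"
  using cosimp_group_X by (simp add: cosimp_group_def)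

lemma codeg_hom: "i \<le> n \<Longrightarrow> codeg X n i \<in> hom (obj X (Suc n)) (obj X n)"
  using cosimp_group_X by (simp add: cosimp_group_def)

lemma coface_coface:
  "i < j \<Longrightarrow> j \<le> Suc (Suc n) \<Longrightarrow> x \<in> carrier (obj X n) \<Longrightarrow>
   coface X (Suc n) j (coface X n i x) = coface X (Suc n) i (coface X n (j - 1) x)"
  using cosimp_group_X by (simp add: cosimp_group_def)

lemma codeg_coface_less:
  "i < j \<Longrightarrow> j \<le> Suc n \<Longrightarrow> x \<in> carrier (obj X (Suc n)) \<Longrightarrow>
   codeg X (Suc n) j (coface X (Suc n) i x) = coface X n i (codeg X n (j - 1) x)"
  using cosimp_group_X by (simp add: cosimp_group_def)

lemma codeg_coface_self: "j \<le> n \<Longrightarrow> x \<in> carrier (obj X n) \<Longrightarrow> codeg X n j (coface X n j x) = x"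
  using cosimp_group_X by (simp add: cosimp_group_def)

lemma codeg_coface_Suc_self:
  "j \<le> n \<Longrightarrow> x \<in> carrier (obj X n) \<Longrightarrow> codeg X n j (coface X n (Suc j) x) = x"
  using cosimp_group_X by (simp add: cosimp_group_def)

lemma codeg_coface_greater:
  "Suc j < i \<Longrightarrow> i \<le> Suc (Suc n) \<Longrightarrow> x \<in> carrier (obj X (Suc n)) \<Longrightarrow>
   codeg X (Suc n) j (coface X (Suc n) i x) = coface X n (i - 1) (codeg X n j x)"
  using cosimp_group_X by (simp add: cosimp_group_def)

lemma codeg_codeg:
  "i \<le> j \<Longrightarrow> j \<le> n \<Longrightarrow> x \<in> carrier (obj X (Suc (Suc n))) \<Longrightarrow>
   codeg X n j (codeg X (Suc n) i x) = codeg X n i (codeg X (Suc n) (Suc j) x)"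
  using cosimp_group_X by (simp add: cosimp_group_def)

lemma coface_closed: "i \<le> Suc n \<Longrightarrow> x \<in> carrier (obj X n) \<Longrightarrow> coface X n i x \<in> carrier (obj X (Suc n))"
  using hom_in_carrier[OF coface_hom] by blast

lemma codeg_closed: "i \<le> n \<Longrightarrow> x \<in> carrier (obj X (Suc n)) \<Longrightarrow> codeg X n i x \<in> carrier (obj X n)"
  using hom_in_carrier[OF codeg_hom] by blast

lemma coface_mult:
  "i \<le> Suc n \<Longrightarrow> x \<in> carrier (obj X n) \<Longrightarrow> y \<in> carrier (obj X n) \<Longrightarrow>
   coface X n i (x \<otimes>\<^bsub>obj X n\<^esub> y) = coface X n i x \<otimes>\<^bsub>obj X (Suc n)\<^esub> coface X n i y"
  using hom_mult[OF coface_hom] by blast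

lemma codeg_mult:
  "i \<le> n \<Longrightarrow> x \<in> carrier (obj X (Suc n)) \<Longrightarrow> y \<in> carrier (obj X (Suc n)) \<Longrightarrow>
   codeg X n i (x \<otimes>\<^bsub>obj X (Suc n)\<^esub> y) = codeg X n i x \<otimes>\<^bsub>obj X n\<^esub> codeg X n i y"
  using hom_mult[OF codeg_hom] by blast

lemma coface_one: "i \<le> Suc n \<Longrightarrow> coface X n i \<one>\<^bsub>obj X n\<^esub> = \<one>\<^bsub>obj X (Suc n)\<^esub>"
  using hom_one[OF coface_hom group_obj group_obj] by blast

end

lemma cosimp_homI:
  assumes "\<And>n. f n \<in> hom (obj X n) (obj Y n)"
    and "\<And>n i x. i \<le> Suc n \<Longrightarrow> x \<in> carrier (obj X n) \<Longrightarrow> f (Suc n) (coface X n i x) = coface Y n i (f n x)"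
    and "\<And>n i x. i \<le> n \<Longrightarrow> x \<in> carrier (obj X (Suc n)) \<Longrightarrow> f n (codeg X n i x) = codeg Y n i (f (Suc n) x)"
  shows "cosimp_hom X Y f"
  using assms by (simp add: cosimp_hom_def)

lemma cosimp_hom_hom: "cosimp_hom X Y f \<Longrightarrow> f n \<in> hom (obj X n) (obj Y n)"
  by (simp add: cosimp_hom_def)

lemma cosimp_hom_coface:
  "cosimp_hom X Y f \<Longrightarrow> i \<le> Suc n \<Longrightarrow> x \<in> carrier (obj X n) \<Longrightarrow>
   f (Suc n) (coface X n i x) = coface Y n i (f n x)"
  by (simp add: cosimp_hom_def)

lemma cosimp_hom_codeg:
  "cosimp_hom X Y f \<Longrightarrow> i \<le> n \<Longrightarrow> x \<in> carrier (obj X (Suc n)) \<Longrightarrow>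
   f n (codeg X n i x) = codeg Y n i (f (Suc n) x)"
  by (simp add: cosimp_hom_def)

section \<open>The cosimplicial group F\<close>

abbreviation FG :: "nat \<Rightarrow> (nat \<times> bool) list monoid" where
  "FG n \<equiv> free_group {1..n}"

lemma Fcs_simps:
  "obj Fcs n = FG n"
  "coface Fcs n i = free_lift (FG (Suc n)) (F_coface_gen n i)"
  "codeg Fcs n i = free_lift (FG n) (F_codeg_gen i)"
  by (simp_all add: Fcs_def)

lemma free_lift_free_group_letter: "free_lift (free_group S) \<phi> [(m, True)] = fg_red (\<phi> m)"
  by (simp add: free_lift_Cons letter_val_def free_group_simps)

lemma free_lift_free_group_two_letters:
  "free_lift (free_group S) \<phi> [(a, True), (b, True)] = fg_red (\<phi> a @ fg_red (\<phi> b))"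
  by (simp add: free_lift_Cons letter_val_def free_group_simps)

lemmas Fcs_gen_simps = Fcs_simps F_coface_gen_def F_codeg_gen_def gen_def free_group_simps
  free_lift_free_group_letter free_lift_free_group_two_letters fg_red_Cons fg_cons_def

lemma Fcs_coface_hom: "i \<le> Suc n \<Longrightarrow> coface Fcs n i \<in> hom (FG n) (FG (Suc n))"
  unfolding Fcs_simps
  by (rule free_lift_hom[OF group_free_group])
    (auto simp: F_coface_gen_def gen_def free_group_simps fg_red_Cons fg_cons_def)

lemma Fcs_codeg_hom: "i \<le> n \<Longrightarrow> codeg Fcs n i \<in> hom (FG (Suc n)) (FG n)"
  unfolding Fcs_simps
  by (rule free_lift_hom[OF group_free_group])
    (auto simp: F_codeg_gen_def gen_def free_group_simps fg_red_Cons fg_cons_def)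

lemma cosimp_group_Fcs: "cosimp_group Fcs"
proof (rule cosimp_groupI, unfold Fcs_simps(1))
  fix n i j x
  assume a: "i < j" "j \<le> Suc (Suc n)" "x \<in> carrier (FG n)"
  show "coface Fcs (Suc n) j (coface Fcs n i x) = coface Fcs (Suc n) i (coface Fcs n (j - 1) x)"
    by (rule free_group_hom_comp_ext[OF group_free_group Fcs_coface_hom Fcs_coface_hom Fcs_coface_hom Fcs_coface_hom])
      (use a in \<open>auto simp: Fcs_gen_simps\<close>)
next
  fix n i j x
  assume a: "i < j" "j \<le> Suc n" "x \<in> carrier (FG (Suc n))"
  show "codeg Fcs (Suc n) j (coface Fcs (Suc n) i x) = coface Fcs n i (codeg Fcs n (j - 1) x)"
    by (rule free_group_hom_comp_ext[OF group_free_group Fcs_coface_hom Fcs_codeg_hom Fcs_codeg_hom Fcs_coface_hom])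
      (use a in \<open>auto simp: Fcs_gen_simps\<close>)
next
  fix n j x
  assume a: "j \<le> n" "x \<in> carrier (FG n)"
  show "codeg Fcs n j (coface Fcs n j x) = x" "codeg Fcs n j (coface Fcs n (Suc j) x) = x"
    by (rule free_group_hom_eq_id[OF Fcs_coface_hom Fcs_codeg_hom]; use a in \<open>auto simp: Fcs_gen_simps\<close>)+
next
  fix n i j x
  assume a: "Suc j < i" "i \<le> Suc (Suc n)" "x \<in> carrier (FG (Suc n))"
  show "codeg Fcs (Suc n) j (coface Fcs (Suc n) i x) = coface Fcs n (i - 1) (codeg Fcs n j x)"
    by (rule free_group_hom_comp_ext[OF group_free_group Fcs_coface_hom Fcs_codeg_hom Fcs_codeg_hom Fcs_coface_hom])
      (use a in \<open>auto simp: Fcs_gen_simps\<close>)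
next
  fix n i j x
  assume a: "i \<le> j" "j \<le> n" "x \<in> carrier (FG (Suc (Suc n)))"
  show "codeg Fcs n j (codeg Fcs (Suc n) i x) = codeg Fcs n i (codeg Fcs (Suc n) (Suc j) x)"
    by (rule free_group_hom_comp_ext[OF group_free_group Fcs_codeg_hom Fcs_codeg_hom Fcs_codeg_hom Fcs_codeg_hom])
      (use a in \<open>auto simp: Fcs_gen_simps\<close>)
qed (blast intro: group_free_group Fcs_coface_hom Fcs_codeg_hom)+

lemma gen_one_Z1_Fcs: "gen 1 \<in> Z1 Fcs"
  by (simp add: Z1_def gen_in_free_group Fcs_gen_simps)

section \<open>The cosimplicial group L^b\<close>

lemma group_Fbar0: "group Fbar0"
  by (simp add: Fbar0_def group_free_group)

lemma free_lift_Fbar0_hom: "group K \<Longrightarrow> c \<in> carrier K \<Longrightarrow> free_lift K (\<lambda>_. c) \<in> hom Fbar0 K"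
  unfolding Fbar0_def by (rule free_lift_hom)

lemma free_lift_Fbar0_gen: "group K \<Longrightarrow> c \<in> carrier K \<Longrightarrow> free_lift K (\<lambda>_. c) (gen 0) = c"
  by (rule free_lift_gen[where S = "{0}"]) auto

definition a0 :: "'a cosimp \<Rightarrow> nat \<Rightarrow> ((nat \<times> bool) list + 'a) list" where
  "a0 L n = fp_inl Fbar0 (obj L n) (gen 0)"

lemma obj_Lb [simp]: "obj (Lb L b) n = Lb_obj L n"
  by (simp add: Lb_def)

lemma coface_Lb:
  "coface (Lb L b) n i = (if i = 0 then
     fp_lift (Lb_obj L (Suc n))
       (free_lift (Lb_obj L (Suc n)) (\<lambda>_. a0 L (Suc n) \<otimes>\<^bsub>Lb_obj L (Suc n)\<^esub> iota L (Suc n) (bseq L b (Suc n))))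
       (\<lambda>y. iota L (Suc n) (coface L n 0 y))
   else fp_lift (Lb_obj L (Suc n)) (fp_inl Fbar0 (obj L (Suc n))) (\<lambda>y. iota L (Suc n) (coface L n i y)))"
  by (simp add: Lb_def a0_def iota_def)

lemma codeg_Lb:
  "codeg (Lb L b) n i = fp_lift (Lb_obj L n) (fp_inl Fbar0 (obj L n)) (\<lambda>y. iota L n (codeg L n i y))"
  by (simp add: Lb_def iota_def)

context cosimplicial_group
begin

lemma group_Lb_obj [simp]: "group (Lb_obj X n)"
  by (simp add: Lb_obj_def group_free_prod[OF group_Fbar0 group_obj])

lemma fp_inl_Lb_obj_hom: "fp_inl Fbar0 (obj X n) \<in> hom Fbar0 (Lb_obj X n)"
  unfolding Lb_obj_def by (rule fp_inl_hom[OF group_Fbar0 group_obj])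

lemma iota_hom: "iota X n \<in> hom (obj X n) (Lb_obj X n)"
  unfolding iota_def Lb_obj_def by (rule fp_inr_hom[OF group_Fbar0 group_obj])

lemma a0_closed: "a0 X n \<in> carrier (Lb_obj X n)"
  unfolding a0_def using hom_in_carrier[OF fp_inl_Lb_obj_hom] gen_in_free_group[of 0 "{0}"]
  by (simp add: Fbar0_def)

lemma iota_closed: "y \<in> carrier (obj X n) \<Longrightarrow> iota X n y \<in> carrier (Lb_obj X n)"
  using hom_in_carrier[OF iota_hom] by blast

lemma iota_mult:
  "x \<in> carrier (obj X n) \<Longrightarrow> y \<in> carrier (obj X n) \<Longrightarrow>
   iota X n (x \<otimes>\<^bsub>obj X n\<^esub> y) = iota X n x \<otimes>\<^bsub>Lb_obj X n\<^esub> iota X n y"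
  using hom_mult[OF iota_hom] by blast

lemma iota_one: "iota X n \<one>\<^bsub>obj X n\<^esub> = \<one>\<^bsub>Lb_obj X n\<^esub>"
  by (rule hom_one[OF iota_hom group_obj group_Lb_obj])

lemma iota_comp_hom: "f \<in> hom G (obj X m) \<Longrightarrow> (\<lambda>y. iota X m (f y)) \<in> hom G (Lb_obj X m)"
  using hom_compose[OF _ iota_hom] by (simp add: comp_def)

context
  fixes K :: "('c, 'k) monoid_scheme" and \<phi> \<psi> and n :: nat
  assumes K: "group K" and \<phi>: "\<phi> \<in> hom Fbar0 K" and \<psi>: "\<psi> \<in> hom (obj X n) K"
begin

lemma fp_lift_Lb_obj_hom: "fp_lift K \<phi> \<psi> \<in> hom (Lb_obj X n) K"
  unfolding Lb_obj_def by (rule fp_lift_hom[OF group_Fbar0 group_obj K \<phi> \<psi>])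

lemma fp_lift_a0: "fp_lift K \<phi> \<psi> (a0 X n) = \<phi> (gen 0)"
  unfolding a0_def by (rule fp_lift_inl[OF group_Fbar0 group_obj K \<phi> \<psi>]) (simp add: Fbar0_def gen_in_free_group)

lemma fp_lift_iota: "y \<in> carrier (obj X n) \<Longrightarrow> fp_lift K \<phi> \<psi> (iota X n y) = \<psi> y"
  unfolding iota_def by (rule fp_lift_inr[OF group_Fbar0 group_obj K \<phi> \<psi>])

end

lemma Lb_obj_hom_ext:
  assumes K: "group K" and f: "f \<in> hom (Lb_obj X n) K" and f': "f' \<in> hom (Lb_obj X n) K"
    and a0_eq: "f (a0 X n) = f' (a0 X n)"
    and iota_eq: "\<And>y. y \<in> carrier (obj X n) \<Longrightarrow> f (iota X n y) = f' (iota X n y)"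
    and x: "x \<in> carrier (Lb_obj X n)"
  shows "f x = f' x"
proof (rule free_prod_hom_ext[OF group_Fbar0 group_obj K])
  show "f (fp_inl Fbar0 (obj X n) g) = f' (fp_inl Fbar0 (obj X n) g)" if "g \<in> carrier Fbar0" for g
    unfolding Fbar0_def
    by (rule free_group_hom_comp_ext[OF K fp_inl_Lb_obj_hom[unfolded Fbar0_def] f fp_inl_Lb_obj_hom[unfolded Fbar0_def] f'])
      (use a0_eq that in \<open>auto simp: a0_def Fbar0_def\<close>)
qed (use f f' x iota_eq in \<open>simp_all add: Lb_obj_def iota_def\<close>)

lemma Lb_obj_hom_comp_ext:
  assumes "group K" "f \<in> hom (Lb_obj X n) H" "g \<in> hom H K" "f' \<in> hom (Lb_obj X n) H'" "g' \<in> hom H' K"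
    and "g (f (a0 X n)) = g' (f' (a0 X n))"
    and "\<And>y. y \<in> carrier (obj X n) \<Longrightarrow> g (f (iota X n y)) = g' (f' (iota X n y))"
    and "x \<in> carrier (Lb_obj X n)"
  shows "g (f x) = g' (f' x)"
  using Lb_obj_hom_ext[OF assms(1) hom_compose[OF assms(2,3)] hom_compose[OF assms(4,5)]] assms(6-8)
  by simp

end

locale cosimp_cocycle = cosimplicial_group L for L :: "'a cosimp" +
  fixes b :: 'a
  assumes cocycle: "b \<in> Z1 L"
begin

lemma cocycle_closed: "b \<in> carrier (obj L 1)"
  using cocycle by (simp add: Z1_def)

lemma cocycle_eq: "coface L 1 2 b \<otimes>\<^bsub>obj L 2\<^esub> coface L 1 0 b = coface L 1 1 b"
  using cocycle by (simp add: Z1_def)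

lemma bseq_Suc: "1 \<le> n \<Longrightarrow> bseq L b (Suc n) = coface L n (Suc n) (bseq L b n)"
  by (cases n) auto

lemma bseq_closed: "1 \<le> n \<Longrightarrow> bseq L b n \<in> carrier (obj L n)"
proof (induction n rule: nat_induct_at_least)
  case base
  show ?case using cocycle_closed by simp
qed (simp add: bseq_Suc coface_closed)

lemma coface_bseq: "1 \<le> n \<Longrightarrow> 2 \<le> j \<Longrightarrow> j \<le> Suc n \<Longrightarrow> coface L n j (bseq L b n) = bseq L b (Suc n)"
proof (induction n arbitrary: j rule: nat_induct_at_least)
  case base
  then show ?case by (simp add: numeral_2_eq_2)
next
  case (Suc n)
  show ?case
  proof (cases "j = Suc (Suc n)")
    case False
    then have j: "j \<le> Suc n" using Suc.prems by simp
    have "coface L (Suc n) j (bseq L b (Suc n)) = coface L (Suc n) j (coface L n (Suc n) (bseq L b n))"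
      using Suc.hyps by (simp add: bseq_Suc)
    also have "\<dots> = coface L (Suc n) (Suc (Suc n)) (coface L n j (bseq L b n))"
      using Suc.prems j coface_coface[of j "Suc (Suc n)" n] bseq_closed[OF Suc.hyps(1)] by simp
    also have "coface L n j (bseq L b n) = bseq L b (Suc n)"
      using Suc.IH Suc.prems j by blast
    finally show ?thesis by simp
  qed (simp add: bseq_Suc)
qed

lemma coface_one_bseq:
  "1 \<le> n \<Longrightarrow> coface L n 1 (bseq L b n) = bseq L b (Suc n) \<otimes>\<^bsub>obj L (Suc n)\<^esub> coface L n 0 (bseq L b n)"
proof (induction n rule: nat_induct_at_least)
  case base
  then show ?case using cocycle_eq by (simp add: numeral_2_eq_2)
next
  case (Suc n)
  have bn: "bseq L b n \<in> carrier (obj L n)" using bseq_closed[OF Suc.hyps(1)] .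
  have "coface L (Suc n) 1 (bseq L b (Suc n)) = coface L (Suc n) (Suc (Suc n)) (coface L n 1 (bseq L b n))"
    using coface_coface[of 1 "Suc (Suc n)" n] bn Suc.hyps by (simp add: bseq_Suc)
  also have "\<dots> = bseq L b (Suc (Suc n)) \<otimes>\<^bsub>obj L (Suc (Suc n))\<^esub>
      coface L (Suc n) (Suc (Suc n)) (coface L n 0 (bseq L b n))"
    using Suc.IH bn Suc.hyps by (simp add: coface_mult bseq_closed coface_closed bseq_Suc)
  also have "coface L (Suc n) (Suc (Suc n)) (coface L n 0 (bseq L b n)) = coface L (Suc n) 0 (bseq L b (Suc n))"
    using coface_coface[of 0 "Suc (Suc n)" n] bn Suc.hyps by (simp add: bseq_Suc)
  finally show ?case .
qed

lemma codeg_bseq: "1 \<le> j \<Longrightarrow> j \<le> n \<Longrightarrow> codeg L n j (bseq L b (Suc n)) = bseq L b n"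
proof (induction n arbitrary: j)
  case (Suc n)
  show ?case
  proof (cases "j = Suc n")
    case True
    then show ?thesis using codeg_coface_Suc_self[of "Suc n" "Suc n"] bseq_closed[of "Suc n"]
      by (simp add: bseq_Suc)
  next
    case False
    then have j: "j \<le> n" "1 \<le> n" using Suc.prems by simp_all
    have "codeg L (Suc n) j (coface L (Suc n) (Suc (Suc n)) (bseq L b (Suc n)))
        = coface L n (Suc n) (codeg L n j (bseq L b (Suc n)))"
      using codeg_coface_greater[of j "Suc (Suc n)" n] j bseq_closed[of "Suc n"] by simp
    then show ?thesis using Suc.IH[OF Suc.prems(1) j(1)] j by (simp add: bseq_Suc)
  qed
qed simp

text \<open>Apply s^1 to the cocycle identity d^2 b \<cdot> d^0 b = d^1 b: this gives b \<cdot> d^0 s^0 b = b.\<close>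

lemma codeg_zero_cocycle: "codeg L 0 0 b = \<one>\<^bsub>obj L 0\<^esub>"
proof -
  interpret L1: group "obj L 1" by simp
  have b: "b \<in> carrier (obj L 1)" by (rule cocycle_closed)
  have s0b: "codeg L 0 0 b \<in> carrier (obj L 0)" using codeg_closed[of 0 0 b] b by simp
  have d0s0b: "coface L 0 0 (codeg L 0 0 b) \<in> carrier (obj L 1)" using coface_closed[of 0 0] s0b by simp
  have "b = codeg L 1 1 (coface L 1 1 b)"
    using codeg_coface_self[of 1 1 b] b by simp
  also have "\<dots> = codeg L 1 1 (coface L 1 2 b) \<otimes>\<^bsub>obj L 1\<^esub> codeg L 1 1 (coface L 1 0 b)"
    using cocycle_eq[symmetric] codeg_mult[of 1 1] coface_closed[of 2 1 b] coface_closed[of 0 1 b] b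
    by (simp add: numeral_2_eq_2)
  also have "\<dots> = b \<otimes>\<^bsub>obj L 1\<^esub> coface L 0 0 (codeg L 0 0 b)"
    using codeg_coface_Suc_self[of 1 1 b] codeg_coface_less[of 0 1 0 b] b by (simp add: numeral_2_eq_2)
  finally have "coface L 0 0 (codeg L 0 0 b) = \<one>\<^bsub>obj L 1\<^esub>"
    using L1.l_cancel_one[OF b d0s0b] by simp
  then show ?thesis
    using codeg_coface_self[of 0 0 "codeg L 0 0 b"] s0b hom_one[OF codeg_hom[of 0 0] group_obj group_obj]
    by simp
qed

lemma codeg_zero_bseq: "codeg L n 0 (bseq L b (Suc n)) = \<one>\<^bsub>obj L n\<^esub>"
proof (induction n)
  case (Suc n)
  have "codeg L (Suc n) 0 (coface L (Suc n) (Suc (Suc n)) (bseq L b (Suc n)))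
      = coface L n (Suc n) (codeg L n 0 (bseq L b (Suc n)))"
    using codeg_coface_greater[of 0 "Suc (Suc n)" n] bseq_closed[of "Suc n"] by simp
  then show ?case using Suc.IH coface_one[of "Suc n" n] by simp
qed (simp add: codeg_zero_cocycle)

lemma a0_bseq_closed:
  "a0 L (Suc n) \<otimes>\<^bsub>Lb_obj L (Suc n)\<^esub> iota L (Suc n) (bseq L b (Suc n)) \<in> carrier (Lb_obj L (Suc n))"
  by (simp add: monoid.m_closed[OF group.is_monoid[OF group_Lb_obj]] a0_closed iota_closed bseq_closed)

lemma Lb_coface_hom: "i \<le> Suc n \<Longrightarrow> coface (Lb L b) n i \<in> hom (Lb_obj L n) (Lb_obj L (Suc n))"
  by (auto simp: coface_Lb intro!: fp_lift_Lb_obj_hom free_lift_Fbar0_hom a0_bseq_closed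
      iota_comp_hom coface_hom fp_inl_Lb_obj_hom)

lemma Lb_codeg_hom: "i \<le> n \<Longrightarrow> codeg (Lb L b) n i \<in> hom (Lb_obj L (Suc n)) (Lb_obj L n)"
  by (auto simp: codeg_Lb intro!: fp_lift_Lb_obj_hom iota_comp_hom codeg_hom fp_inl_Lb_obj_hom)

lemma Lb_coface_zero_a0:
  "coface (Lb L b) n 0 (a0 L n) = a0 L (Suc n) \<otimes>\<^bsub>Lb_obj L (Suc n)\<^esub> iota L (Suc n) (bseq L b (Suc n))"
  by (simp add: coface_Lb fp_lift_a0 free_lift_Fbar0_hom free_lift_Fbar0_gen a0_bseq_closed
      iota_comp_hom coface_hom)

lemma Lb_coface_a0: "0 < i \<Longrightarrow> i \<le> Suc n \<Longrightarrow> coface (Lb L b) n i (a0 L n) = a0 L (Suc n)"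
  by (simp add: coface_Lb fp_lift_a0 fp_inl_Lb_obj_hom iota_comp_hom coface_hom) (simp add: a0_def)

lemma Lb_coface_iota:
  "i \<le> Suc n \<Longrightarrow> y \<in> carrier (obj L n) \<Longrightarrow> coface (Lb L b) n i (iota L n y) = iota L (Suc n) (coface L n i y)"
  by (simp add: coface_Lb fp_lift_iota free_lift_Fbar0_hom a0_bseq_closed fp_inl_Lb_obj_hom
      iota_comp_hom coface_hom)

lemma Lb_codeg_a0: "i \<le> n \<Longrightarrow> codeg (Lb L b) n i (a0 L (Suc n)) = a0 L n"
  by (simp add: codeg_Lb fp_lift_a0 fp_inl_Lb_obj_hom iota_comp_hom codeg_hom) (simp add: a0_def)

lemma Lb_codeg_iota:
  "i \<le> n \<Longrightarrow> y \<in> carrier (obj L (Suc n)) \<Longrightarrow> codeg (Lb L b) n i (iota L (Suc n) y) = iota L n (codeg L n i y)"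
  by (simp add: codeg_Lb fp_lift_iota fp_inl_Lb_obj_hom iota_comp_hom codeg_hom)

lemma Lb_coface_mult:
  "i \<le> Suc n \<Longrightarrow> x \<in> carrier (Lb_obj L n) \<Longrightarrow> y \<in> carrier (Lb_obj L n) \<Longrightarrow>
   coface (Lb L b) n i (x \<otimes>\<^bsub>Lb_obj L n\<^esub> y) = coface (Lb L b) n i x \<otimes>\<^bsub>Lb_obj L (Suc n)\<^esub> coface (Lb L b) n i y"
  using hom_mult[OF Lb_coface_hom] by blast

lemma Lb_codeg_mult:
  "i \<le> n \<Longrightarrow> x \<in> carrier (Lb_obj L (Suc n)) \<Longrightarrow> y \<in> carrier (Lb_obj L (Suc n)) \<Longrightarrow>
   codeg (Lb L b) n i (x \<otimes>\<^bsub>Lb_obj L (Suc n)\<^esub> y) = codeg (Lb L b) n i x \<otimes>\<^bsub>Lb_obj L n\<^esub> codeg (Lb L b) n i y"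
  using hom_mult[OF Lb_codeg_hom] by blast

text \<open>On a0 the only non-trivial case is j = 1, where d^1 b_(n+1) = b_(n+2) \<cdot> d^0 b_(n+1)
  is needed; for j \<ge> 2 the coface d^j fixes b_(n+1).\<close>

lemma Lb_coface_coface_a0:
  assumes "i < j" "j \<le> Suc (Suc n)"
  shows "coface (Lb L b) (Suc n) j (coface (Lb L b) n i (a0 L n))
       = coface (Lb L b) (Suc n) i (coface (Lb L b) n (j - 1) (a0 L n))"
proof (cases "i = 0")
  case True
  interpret Lb2: group "Lb_obj L (Suc (Suc n))" by simp
  have b1: "bseq L b (Suc n) \<in> carrier (obj L (Suc n))" by (simp add: bseq_closed)
  have lhs: "coface (Lb L b) (Suc n) j (coface (Lb L b) n i (a0 L n))
      = a0 L (Suc (Suc n)) \<otimes>\<^bsub>Lb_obj L (Suc (Suc n))\<^esub> iota L (Suc (Suc n)) (coface L (Suc n) j (bseq L b (Suc n)))"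
    using True assms b1
    by (simp add: Lb_coface_zero_a0 Lb_coface_mult a0_closed iota_closed Lb_coface_a0 Lb_coface_iota)
  show ?thesis
  proof (cases "j = 1")
    case True
    have "coface L (Suc n) j (bseq L b (Suc n))
        = bseq L b (Suc (Suc n)) \<otimes>\<^bsub>obj L (Suc (Suc n))\<^esub> coface L (Suc n) 0 (bseq L b (Suc n))"
      using True coface_one_bseq[of "Suc n"] by simp
    with lhs \<open>i = 0\<close> True b1 show ?thesis
      by (simp add: Lb_coface_zero_a0 Lb_coface_mult Lb_coface_iota a0_closed iota_closed iota_mult
          bseq_closed coface_closed Lb2.m_assoc)
  next
    case False
    then have "coface L (Suc n) j (bseq L b (Suc n)) = bseq L b (Suc (Suc n))"
      using assms \<open>i = 0\<close> coface_bseq[of "Suc n" j] by simp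
    with lhs \<open>i = 0\<close> False assms show ?thesis by (simp add: Lb_coface_zero_a0 Lb_coface_a0)
  qed
qed (use assms in \<open>simp add: Lb_coface_a0\<close>)

lemma Lb_codeg_coface_less_a0:
  assumes "i < j" "j \<le> Suc n"
  shows "codeg (Lb L b) (Suc n) j (coface (Lb L b) (Suc n) i (a0 L (Suc n)))
       = coface (Lb L b) n i (codeg (Lb L b) n (j - 1) (a0 L (Suc n)))"
proof (cases "i = 0")
  case True
  then have "codeg L (Suc n) j (bseq L b (Suc (Suc n))) = bseq L b (Suc n)"
    using assms codeg_bseq[of j "Suc n"] by simp
  with True assms show ?thesis
    by (simp add: Lb_coface_zero_a0 Lb_codeg_mult a0_closed iota_closed bseq_closed coface_closed
        Lb_codeg_a0 Lb_codeg_iota)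
qed (use assms in \<open>simp add: Lb_coface_a0 Lb_codeg_a0\<close>)

lemma Lb_codeg_coface_self_a0:
  assumes "j \<le> n"
  shows "codeg (Lb L b) n j (coface (Lb L b) n j (a0 L n)) = a0 L n"
proof (cases "j = 0")
  case True
  interpret Lb: group "Lb_obj L n" by simp
  show ?thesis using True assms
    by (simp add: Lb_coface_zero_a0 Lb_codeg_mult a0_closed iota_closed bseq_closed Lb_codeg_a0 Lb_codeg_iota
        codeg_zero_bseq iota_one)
qed (use assms in \<open>simp add: Lb_coface_a0 Lb_codeg_a0\<close>)

lemma cosimp_group_Lb: "cosimp_group (Lb L b)"
proof (rule cosimp_groupI, unfold obj_Lb)
  fix n i j x
  assume a: "i < j" "j \<le> Suc (Suc n)" "x \<in> carrier (Lb_obj L n)"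
  show "coface (Lb L b) (Suc n) j (coface (Lb L b) n i x) = coface (Lb L b) (Suc n) i (coface (Lb L b) n (j - 1) x)"
    by (rule Lb_obj_hom_comp_ext[OF group_Lb_obj Lb_coface_hom Lb_coface_hom Lb_coface_hom Lb_coface_hom])
      (use a in \<open>auto simp: Lb_coface_coface_a0 Lb_coface_iota coface_closed coface_coface\<close>)
next
  fix n i j x
  assume a: "i < j" "j \<le> Suc n" "x \<in> carrier (Lb_obj L (Suc n))"
  show "codeg (Lb L b) (Suc n) j (coface (Lb L b) (Suc n) i x) = coface (Lb L b) n i (codeg (Lb L b) n (j - 1) x)"
    by (rule Lb_obj_hom_comp_ext[OF group_Lb_obj Lb_coface_hom Lb_codeg_hom Lb_codeg_hom Lb_coface_hom])
      (use a in \<open>auto simp: Lb_codeg_coface_less_a0 Lb_coface_iota Lb_codeg_iota coface_closed codeg_closed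
        codeg_coface_less\<close>)
next
  fix n j x
  assume a: "j \<le> n" "x \<in> carrier (Lb_obj L n)"
  show "codeg (Lb L b) n j (coface (Lb L b) n j x) = x"
    by (rule Lb_obj_hom_ext[OF group_Lb_obj hom_compose[OF Lb_coface_hom Lb_codeg_hom] iso_imp_homomorphism[OF id_iso], simplified])
      (use a in \<open>auto simp: Lb_codeg_coface_self_a0 Lb_coface_iota Lb_codeg_iota coface_closed codeg_coface_self\<close>)
  show "codeg (Lb L b) n j (coface (Lb L b) n (Suc j) x) = x"
    by (rule Lb_obj_hom_ext[OF group_Lb_obj hom_compose[OF Lb_coface_hom Lb_codeg_hom] iso_imp_homomorphism[OF id_iso], simplified])
      (use a in \<open>auto simp: Lb_coface_a0 Lb_codeg_a0 Lb_coface_iota Lb_codeg_iota coface_closed codeg_coface_Suc_self\<close>)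
next
  fix n i j x
  assume a: "Suc j < i" "i \<le> Suc (Suc n)" "x \<in> carrier (Lb_obj L (Suc n))"
  show "codeg (Lb L b) (Suc n) j (coface (Lb L b) (Suc n) i x) = coface (Lb L b) n (i - 1) (codeg (Lb L b) n j x)"
    by (rule Lb_obj_hom_comp_ext[OF group_Lb_obj Lb_coface_hom Lb_codeg_hom Lb_codeg_hom Lb_coface_hom])
      (use a in \<open>auto simp: Lb_coface_a0 Lb_codeg_a0 Lb_coface_iota Lb_codeg_iota coface_closed codeg_closed
        codeg_coface_greater\<close>)
next
  fix n i j x
  assume a: "i \<le> j" "j \<le> n" "x \<in> carrier (Lb_obj L (Suc (Suc n)))"
  show "codeg (Lb L b) n j (codeg (Lb L b) (Suc n) i x) = codeg (Lb L b) n i (codeg (Lb L b) (Suc n) (Suc j) x)"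
    by (rule Lb_obj_hom_comp_ext[OF group_Lb_obj Lb_codeg_hom Lb_codeg_hom Lb_codeg_hom Lb_codeg_hom])
      (use a in \<open>auto simp: Lb_codeg_a0 Lb_codeg_iota codeg_closed codeg_codeg\<close>)
qed (simp_all add: Lb_coface_hom Lb_codeg_hom)

lemma cosimp_hom_iota: "cosimp_hom L (Lb L b) (iota L)"
  by (rule cosimp_homI) (simp_all add: iota_hom Lb_coface_iota Lb_codeg_iota)

lemma Lb_cosimp_homI:
  assumes M: "cosimp_group M" and u: "\<And>n. u n \<in> hom (Lb_obj L n) (obj M n)"
    and coface_a0: "\<And>n i. i \<le> Suc n \<Longrightarrow>
      u (Suc n) (coface (Lb L b) n i (a0 L n)) = coface M n i (u n (a0 L n))"
    and coface_iota: "\<And>n i y. i \<le> Suc n \<Longrightarrow> y \<in> carrier (obj L n) \<Longrightarrow>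
      u (Suc n) (iota L (Suc n) (coface L n i y)) = coface M n i (u n (iota L n y))"
    and codeg_a0: "\<And>n i. i \<le> n \<Longrightarrow> u n (a0 L n) = codeg M n i (u (Suc n) (a0 L (Suc n)))"
    and codeg_iota: "\<And>n i y. i \<le> n \<Longrightarrow> y \<in> carrier (obj L (Suc n)) \<Longrightarrow>
      u n (iota L n (codeg L n i y)) = codeg M n i (u (Suc n) (iota L (Suc n) y))"
  shows "cosimp_hom (Lb L b) M u"
proof -
  interpret M: cosimplicial_group M by (rule cosimplicial_group.intro[OF M])
  show ?thesis
  proof (rule cosimp_homI, unfold obj_Lb)
    fix n i x assume a: "i \<le> Suc n" "x \<in> carrier (Lb_obj L n)"
    show "u (Suc n) (coface (Lb L b) n i x) = coface M n i (u n x)"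
      by (rule Lb_obj_hom_comp_ext[OF M.group_obj Lb_coface_hom u u M.coface_hom])
        (use a in \<open>simp_all add: coface_a0 coface_iota Lb_coface_iota\<close>)
  next
    fix n i x assume a: "i \<le> n" "x \<in> carrier (Lb_obj L (Suc n))"
    show "u n (codeg (Lb L b) n i x) = codeg M n i (u (Suc n) x)"
      by (rule Lb_obj_hom_comp_ext[OF M.group_obj Lb_codeg_hom u u M.codeg_hom])
        (use a in \<open>simp_all add: codeg_a0[symmetric] codeg_iota Lb_codeg_a0 Lb_codeg_iota\<close>)
  qed (rule u)
qed

end

section \<open>The pushout square\<close>

interpretation Fplus: cosimp_cocycle Fcs "gen 1"
  rewrites "Lb Fcs (gen 1) = Fplus"
  by unfold_locales (fact cosimp_group_Fcs gen_one_Z1_Fcs Fplus_def[symmetric])+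

locale cocycle_map = cosimp_cocycle L b for L :: "'a cosimp" and b +
  fixes h :: "nat \<Rightarrow> (nat \<times> bool) list \<Rightarrow> 'a"
  assumes h: "cosimp_hom Fcs L h" and h_gen: "h 1 (gen 1) = b"
begin

text \<open>The simplifier rewrites 1 to Suc 0, which would stop the lemmas about gen 1 from matching;
  hence the occasional del: One_nat_def below.\<close>

lemma h_bseq: "1 \<le> n \<Longrightarrow> h n (bseq Fcs (gen 1) n) = bseq L b n"
proof (induction n rule: nat_induct_at_least)
  case (Suc n)
  then show ?case
    by (simp add: Fplus.bseq_Suc bseq_Suc cosimp_hom_coface[OF h] Fplus.bseq_closed del: One_nat_def)
qed (use h_gen in simp)

lemma h_hom: "h n \<in> hom (obj Fcs n) (obj L n)"
  by (rule cosimp_hom_hom[OF h])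

lemma idstar_hom: "idstar L h n \<in> hom (Lb_obj Fcs n) (Lb_obj L n)"
  unfolding idstar_def iota_def[symmetric]
  by (rule Fplus.fp_lift_Lb_obj_hom[OF group_Lb_obj fp_inl_Lb_obj_hom iota_comp_hom[OF h_hom]])

lemma idstar_a0: "idstar L h n (a0 Fcs n) = a0 L n"
  unfolding idstar_def iota_def[symmetric]
  by (simp add: Fplus.fp_lift_a0[OF group_Lb_obj fp_inl_Lb_obj_hom iota_comp_hom[OF h_hom]]) (simp add: a0_def)

lemma idstar_iota: "y \<in> carrier (obj Fcs n) \<Longrightarrow> idstar L h n (iota Fcs n y) = iota L n (h n y)"
  unfolding idstar_def iota_def[symmetric]
  by (rule Fplus.fp_lift_iota[OF group_Lb_obj fp_inl_Lb_obj_hom iota_comp_hom[OF h_hom]])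

lemma cosimp_hom_idstar: "cosimp_hom Fplus (Lb L b) (idstar L h)"
proof (rule Fplus.Lb_cosimp_homI[OF cosimp_group_Lb], unfold obj_Lb)
  fix n i assume i: "i \<le> Suc n"
  have b: "bseq Fcs (gen 1) (Suc n) \<in> carrier (obj Fcs (Suc n))" by (simp add: Fplus.bseq_closed del: One_nat_def)
  show "idstar L h (Suc n) (coface Fplus n i (a0 Fcs n)) = coface (Lb L b) n i (idstar L h n (a0 Fcs n))"
  proof (cases "i = 0")
    case True
    then show ?thesis using b h_bseq[of "Suc n"] hom_mult[OF idstar_hom]
      by (simp add: Fplus.Lb_coface_zero_a0 Lb_coface_zero_a0 idstar_a0 idstar_iota
          Fplus.a0_closed Fplus.iota_closed)
  qed (use i in \<open>simp add: Fplus.Lb_coface_a0 Lb_coface_a0 idstar_a0\<close>)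
qed (simp_all add: idstar_hom idstar_a0 idstar_iota Lb_coface_iota Lb_codeg_iota Lb_codeg_a0
    Fplus.coface_closed Fplus.codeg_closed cosimp_hom_coface[OF h] cosimp_hom_codeg[OF h]
    hom_in_carrier[OF h_hom])

end

definition pushout_map :: "'m cosimp \<Rightarrow> (nat \<Rightarrow> ((nat \<times> bool) list + (nat \<times> bool) list) list \<Rightarrow> 'm)
    \<Rightarrow> (nat \<Rightarrow> 'a \<Rightarrow> 'm) \<Rightarrow> nat \<Rightarrow> ((nat \<times> bool) list + 'a) list \<Rightarrow> 'm" where
  "pushout_map M f g n = fp_lift (obj M n) (\<lambda>w. f n (fp_inl Fbar0 (obj Fcs n) w)) (g n)"

locale pushout_cocone = cocycle_map L b h + M: cosimplicial_group M
  for L :: "'a cosimp" and b h and M :: "'m cosimp" +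
  fixes f :: "nat \<Rightarrow> ((nat \<times> bool) list + (nat \<times> bool) list) list \<Rightarrow> 'm"
    and g :: "nat \<Rightarrow> 'a \<Rightarrow> 'm"
  assumes f: "cosimp_hom Fplus M f" and g: "cosimp_hom L M g"
    and commutes: "\<And>n y. y \<in> carrier (obj Fcs n) \<Longrightarrow> f n (iota Fcs n y) = g n (h n y)"
begin

lemma f_hom: "f n \<in> hom (Lb_obj Fcs n) (obj M n)"
  using cosimp_hom_hom[OF f] by (simp add: Fplus_def)

lemma f_inl_hom: "(\<lambda>w. f n (fp_inl Fbar0 (obj Fcs n) w)) \<in> hom Fbar0 (obj M n)"
  using hom_compose[OF Fplus.fp_inl_Lb_obj_hom f_hom] by (simp add: comp_def)

lemma pushout_map_hom: "pushout_map M f g n \<in> hom (Lb_obj L n) (obj M n)"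
  unfolding pushout_map_def by (rule fp_lift_Lb_obj_hom[OF M.group_obj f_inl_hom cosimp_hom_hom[OF g]])

lemma pushout_map_a0: "pushout_map M f g n (a0 L n) = f n (a0 Fcs n)"
  unfolding pushout_map_def by (simp add: fp_lift_a0[OF M.group_obj f_inl_hom cosimp_hom_hom[OF g]]) (simp add: a0_def)

lemma pushout_map_iota: "y \<in> carrier (obj L n) \<Longrightarrow> pushout_map M f g n (iota L n y) = g n y"
  unfolding pushout_map_def by (rule fp_lift_iota[OF M.group_obj f_inl_hom cosimp_hom_hom[OF g]])

lemma f_coface_zero_a0:
  "f (Suc n) (coface Fplus n 0 (a0 Fcs n)) = f (Suc n) (a0 Fcs (Suc n)) \<otimes>\<^bsub>obj M (Suc n)\<^esub> g (Suc n) (bseq L b (Suc n))"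
proof -
  have "bseq Fcs (gen 1) (Suc n) \<in> carrier (obj Fcs (Suc n))" by (simp add: Fplus.bseq_closed del: One_nat_def)
  then show ?thesis using hom_mult[OF f_hom] h_bseq[of "Suc n"]
    by (simp add: Fplus.Lb_coface_zero_a0 Fplus.a0_closed Fplus.iota_closed commutes del: One_nat_def)
qed

lemma cosimp_hom_pushout_map: "cosimp_hom (Lb L b) M (pushout_map M f g)"
proof (rule Lb_cosimp_homI[OF M.cosimp_group_X pushout_map_hom])
  fix n i assume i: "i \<le> Suc n"
  have "coface M n i (f n (a0 Fcs n)) = f (Suc n) (coface Fplus n i (a0 Fcs n))"
    using cosimp_hom_coface[OF f i] Fplus.a0_closed by (simp add: Fplus_def)
  then show "pushout_map M f g (Suc n) (coface (Lb L b) n i (a0 L n)) = coface M n i (pushout_map M f g n (a0 L n))"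
    using i by (cases "i = 0")
      (simp_all add: Lb_coface_zero_a0 Lb_coface_a0 Fplus.Lb_coface_a0 f_coface_zero_a0 hom_mult[OF pushout_map_hom]
        a0_closed iota_closed bseq_closed pushout_map_a0 pushout_map_iota)
next
  fix n i :: nat assume i: "i \<le> n"
  have "codeg M n i (f (Suc n) (a0 Fcs (Suc n))) = f n (codeg Fplus n i (a0 Fcs (Suc n)))"
    using cosimp_hom_codeg[OF f i] Fplus.a0_closed by (simp add: Fplus_def)
  then show "pushout_map M f g n (a0 L n) = codeg M n i (pushout_map M f g (Suc n) (a0 L (Suc n)))"
    using i by (simp add: Fplus.Lb_codeg_a0 pushout_map_a0)
qed (simp_all add: pushout_map_iota coface_closed codeg_closed cosimp_hom_coface[OF g] cosimp_hom_codeg[OF g])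

lemma pushout_map_idstar: "x \<in> carrier (Lb_obj Fcs n) \<Longrightarrow> pushout_map M f g n (idstar L h n x) = f n x"
  using Fplus.Lb_obj_hom_ext[OF M.group_obj hom_compose[OF idstar_hom pushout_map_hom] f_hom]
  by (simp add: idstar_a0 idstar_iota pushout_map_a0 pushout_map_iota commutes hom_in_carrier[OF h_hom])

lemma pushout_map_unique:
  assumes u: "cosimp_hom (Lb L b) M u"
    and u_idstar: "\<And>n x. x \<in> carrier (Lb_obj Fcs n) \<Longrightarrow> u n (idstar L h n x) = f n x"
    and u_iota: "\<And>n y. y \<in> carrier (obj L n) \<Longrightarrow> u n (iota L n y) = g n y"
    and x: "x \<in> carrier (Lb_obj L n)"
  shows "u n x = pushout_map M f g n x"
  using Lb_obj_hom_ext[OF M.group_obj _ pushout_map_hom _ _ x] cosimp_hom_hom[OF u]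
    u_idstar[OF Fplus.a0_closed] u_iota
  by (simp add: idstar_a0 pushout_map_a0 pushout_map_iota)

end

lemma (in cocycle_map) pushout_universal_property:
  fixes M :: "'m cosimp"
  assumes "cosimp_group M" "cosimp_hom Fplus M f" "cosimp_hom L M g"
    and "\<And>n y. y \<in> carrier (obj Fcs n) \<Longrightarrow> f n (iota Fcs n y) = g n (h n y)"
  shows "\<exists>u. cosimp_hom (Lb L b) M u \<and>
    (\<forall>n. \<forall>x\<in>carrier (obj Fplus n). u n (idstar L h n x) = f n x) \<and>
    (\<forall>n. \<forall>x\<in>carrier (obj L n). u n (iota L n x) = g n x) \<and>
    (\<forall>u'. cosimp_hom (Lb L b) M u' \<and>
       (\<forall>n. \<forall>x\<in>carrier (obj Fplus n). u' n (idstar L h n x) = f n x) \<and>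
       (\<forall>n. \<forall>x\<in>carrier (obj L n). u' n (iota L n x) = g n x) \<longrightarrow>
       (\<forall>n. \<forall>x\<in>carrier (obj (Lb L b) n). u' n x = u n x))"
proof -
  interpret pushout_cocone L b h M f g
    using assms by unfold_locales auto
  show ?thesis
    by (intro exI[of _ "pushout_map M f g"])
      (auto simp: Fplus_def cosimp_hom_pushout_map pushout_map_idstar pushout_map_iota
        intro: pushout_map_unique)
qed

theorem proposition3p4:
  fixes L :: "'a cosimp" and b :: 'a and h :: "nat \<Rightarrow> (nat \<times> bool) list \<Rightarrow> 'a"
  assumes L: "cosimp_group L"
    and b: "b \<in> Z1 L"
    and h: "cosimp_hom Fcs L h"
    and hb: "h 1 (gen 1) = b"
  shows
    "cosimp_group Fplus \<and> cosimp_group (Lb L b) \<and>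
     cosimp_hom Fcs Fplus iota_plus \<and> cosimp_hom L (Lb L b) (iota L) \<and>
     cosimp_hom Fplus (Lb L b) (idstar L h) \<and>
     (\<forall>n. \<forall>x\<in>carrier (obj Fcs n). idstar L h n (iota_plus n x) = iota L n (h n x)) \<and>
     (\<forall>(M :: 'm cosimp) f g.
        cosimp_group M \<and> cosimp_hom Fplus M f \<and> cosimp_hom L M g \<and>
        (\<forall>n. \<forall>x\<in>carrier (obj Fcs n). f n (iota_plus n x) = g n (h n x)) \<longrightarrow>
        (\<exists>u. cosimp_hom (Lb L b) M u \<and>
             (\<forall>n. \<forall>x\<in>carrier (obj Fplus n). u n (idstar L h n x) = f n x) \<and>
             (\<forall>n. \<forall>x\<in>carrier (obj L n). u n (iota L n x) = g n x) \<and>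
             (\<forall>u'. cosimp_hom (Lb L b) M u' \<and>
                   (\<forall>n. \<forall>x\<in>carrier (obj Fplus n). u' n (idstar L h n x) = f n x) \<and>
                   (\<forall>n. \<forall>x\<in>carrier (obj L n). u' n (iota L n x) = g n x) \<longrightarrow>
                   (\<forall>n. \<forall>x\<in>carrier (obj (Lb L b) n). u' n x = u n x))))"
proof -
  interpret cocycle_map L b h
    by unfold_locales (fact L b h hb)+
  show ?thesis
    using Fplus.cosimp_group_Lb cosimp_group_Lb Fplus.cosimp_hom_iota cosimp_hom_iota
      cosimp_hom_idstar idstar_iota pushout_universal_property
    by (simp add: iota_plus_def) blast
qed

end
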